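(* Let $\mathcal{T}$ be a tree (on vertex set $\{1,\dots,n\}$, viewed as a subgraph of $K_n$) with $m$ edges, and let $\mathcal{E}_{\mathcal{T}}$ be its generalized Fomin–Kirillov algebra. Then $p(\mathcal{E}_{\mathcal{T}})\leq m$, i.e. $\mathcal{E}_{\mathcal{T}}$ admits no truncated point module of degree greater than $m$. Moreover this bound is best possible (it is attained, e.g., by path graphs).
   Context: Work over an algebraically closed field $k$. The Fomin–Kirillov algebra $\mathcal{E}_n$ is the graded $k$-algebra generated by degree-$1$ elements $x_{ij}$, $1\leq i<j\leq n$, subject to: $x_{ij}^2=0$; $x_{ij}x_{kl}=x_{kl}x_{ij}$ whenever $\{i,j\}\cap\{k,l\}=\emptyset$; $x_{ij}x_{jk}-x_{jk}x_{ik}-x_{ik}x_{ij}=0$ and $x_{jk}x_{ij}-x_{ik}x_{jk}-x_{ij}x_{ik}=0$ for $i<j<k$. For a graph $G$ on vertex set $\{1,\dots,n\}$, the generalized Fomin–Kirillov algebra $\mathcal{E}_G$ is the (graded) subalgebra of $\mathcal{E}_n$ generated by the $x_{ij}$ with $\{i,j\}$ an edge of $G$. For a connected graded algebra $A$ generated in degree $1$, a degree-$d$ truncated point module is a graded cyclic module generated in degree $0$ with Hilbert series $1+t+\cdots+t^d$; $\mathcal{P}_d(A)$ is the space of such modules, and $p(A):=\sup\{d\in\mathbb{N}:\mathcal{P}_d(A)\neq\emptyset\}$. *)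

theory Defs
  imports Main "HOL-Library.Extended_Nat" "HOL-Computational_Algebra.Polynomial"
begin

text \<open>An element of the free algebra
  is a coefficient function on words (lists of generators); only finitely
  supported functions arise below. A word [a1,...,al] stands for the monomial
  x_a1 x_a2 ... x_al.\<close>

type_synonym gen = "nat \<times> nat"
type_synonym 'k ncpoly = "gen list \<Rightarrow> 'k"

definition nc_mult :: "'k::comm_ring_1 ncpoly \<Rightarrow> 'k ncpoly \<Rightarrow> 'k ncpoly" where
  "nc_mult p q = (\<lambda>w. \<Sum>i\<le>length w. p (take i w) * q (drop i w))"

definition nc_word :: "gen list \<Rightarrow> 'k::comm_ring_1 ncpoly" where
  "nc_word u = (\<lambda>w. if w = u then 1 else 0)"

definition nc_add :: "'k::comm_ring_1 ncpoly \<Rightarrow> 'k ncpoly \<Rightarrow> 'k ncpoly" where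
  "nc_add p q = (\<lambda>w. p w + q w)"

definition nc_sub :: "'k::comm_ring_1 ncpoly \<Rightarrow> 'k ncpoly \<Rightarrow> 'k ncpoly" where
  "nc_sub p q = (\<lambda>w. p w - q w)"

definition nc_smult :: "'k::comm_ring_1 \<Rightarrow> 'k ncpoly \<Rightarrow> 'k ncpoly" where
  "nc_smult c p = (\<lambda>w. c * p w)"

definition gens :: "nat \<Rightarrow> gen set" where
  "gens n = {(i, j). 1 \<le> i \<and> i < j \<and> j \<le> n}"

definition fk_relators :: "nat \<Rightarrow> 'k::comm_ring_1 ncpoly set" where
  "fk_relators n =
     {nc_word [(i,j),(i,j)] | i j. (i,j) \<in> gens n}
   \<union> {nc_sub (nc_word [(i,j),(k,l)]) (nc_word [(k,l),(i,j)]) | i j k l.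
        (i,j) \<in> gens n \<and> (k,l) \<in> gens n \<and> {i,j} \<inter> {k,l} = {}}
   \<union> {nc_sub (nc_sub (nc_word [(i,j),(j,k)]) (nc_word [(j,k),(i,k)])) (nc_word [(i,k),(i,j)])
        | i j k. 1 \<le> i \<and> i < j \<and> j < k \<and> k \<le> n}
   \<union> {nc_sub (nc_sub (nc_word [(j,k),(i,j)]) (nc_word [(i,k),(j,k)])) (nc_word [(i,j),(i,k)])
        | i j k. 1 \<le> i \<and> i < j \<and> j < k \<and> k \<le> n}"

inductive_set fk_ideal :: "nat \<Rightarrow> 'k::comm_ring_1 ncpoly set" for n where
  zero: "(\<lambda>w. 0) \<in> fk_ideal n"
| rel: "r \<in> fk_relators n \<Longrightarrow> r \<in> fk_ideal n"
| add: "p \<in> fk_ideal n \<Longrightarrow> q \<in> fk_ideal n \<Longrightarrow> nc_add p q \<in> fk_ideal n"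
| smult: "p \<in> fk_ideal n \<Longrightarrow> nc_smult c p \<in> fk_ideal n"
| lmult: "p \<in> fk_ideal n \<Longrightarrow> u \<in> lists (gens n) \<Longrightarrow> nc_mult (nc_word u) p \<in> fk_ideal n"
| rmult: "p \<in> fk_ideal n \<Longrightarrow> u \<in> lists (gens n) \<Longrightarrow> nc_mult p (nc_word u) \<in> fk_ideal n"

text \<open>The generalized FK algebra E_G (subalgebra of E_n generated by the x_e, e an edge of G)
  is the free algebra on the edge set E modulo the kernel of the natural map to E_n,
  i.e. modulo the ideal of E_n-relations intersected with the free algebra on E.\<close>
definition fkG_kernel :: "nat \<Rightarrow> gen set \<Rightarrow> 'k::comm_ring_1 ncpoly set" where
  "fkG_kernel n E = {p \<in> fk_ideal n. \<forall>w. p w \<noteq> 0 \<longrightarrow> w \<in> lists E}"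

text \<open>A graded module M = M_0 + ... + M_d with each M_i one-dimensional, with basis
  vectors e_0,...,e_d. A generator x_a (degree 1) acts by x_a e_i = c i a e_(i+1)
  (and x_a e_d = 0, encoded by c j a = 0 for j >= d). The word w then acts on
  e_i by the scalar wcoef c i w times e_(i + length w).\<close>
fun wcoef :: "(nat \<Rightarrow> gen \<Rightarrow> 'k::comm_ring_1) \<Rightarrow> nat \<Rightarrow> gen list \<Rightarrow> 'k" where
  "wcoef c i [] = 1"
| "wcoef c i (a # w) = c (i + length w) a * wcoef c i w"

definition truncated_point_module ::
    "nat \<Rightarrow> gen set \<Rightarrow> nat \<Rightarrow> (nat \<Rightarrow> gen \<Rightarrow> 'k::field) \<Rightarrow> bool" where
  "truncated_point_module n E d c \<longleftrightarrow>
     \<comment> \<open>graded: M_j = 0 for j > d\<close>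
     (\<forall>j a. d \<le> j \<longrightarrow> c j a = 0) \<and>
     \<comment> \<open>cyclic, generated by e_0: every M_i (i \<le> d) equals (E_G)_i e_0\<close>
     (\<forall>i\<le>d. \<exists>w. set w \<subseteq> E \<and> length w = i \<and> wcoef c 0 w \<noteq> 0) \<and>
     \<comment> \<open>a module over E_G: every element of the kernel acts as zero on every e_i\<close>
     (\<forall>p \<in> fkG_kernel n E. \<forall>i\<le>d. \<forall>l.
        (\<Sum>w \<in> {w. set w \<subseteq> E \<and> length w = l}. p w * wcoef c i w) = 0)"

definition pinv :: "'k::field itself \<Rightarrow> nat \<Rightarrow> gen set \<Rightarrow> enat" where
  "pinv (T :: 'k itself) n E =
     Sup {enat d | d. \<exists>c :: nat \<Rightarrow> gen \<Rightarrow> 'k. truncated_point_module n E d c}"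

definition adj :: "gen set \<Rightarrow> nat \<Rightarrow> nat \<Rightarrow> bool" where
  "adj E u v \<longleftrightarrow> u \<noteq> v \<and> (min u v, max u v) \<in> E"

definition connected_graph :: "nat \<Rightarrow> gen set \<Rightarrow> bool" where
  "connected_graph n E \<longleftrightarrow>
     (\<forall>u\<in>{1..n}. \<forall>v\<in>{1..n}. (u, v) \<in> {(a, b). adj E a b}\<^sup>*)"

definition acyclic_graph :: "gen set \<Rightarrow> bool" where
  "acyclic_graph E \<longleftrightarrow>
     \<not> (\<exists>vs. 3 \<le> length vs \<and> distinct vs \<and>
            (\<forall>i < length vs. adj E (vs ! i) (vs ! ((i + 1) mod length vs))))"

definition is_tree :: "nat \<Rightarrow> gen set \<Rightarrow> bool" where
  "is_tree n E \<longleftrightarrow> 1 \<le> n \<and> E \<subseteq> gens n \<and> connected_graph n E \<and> acyclic_graph E"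

definition path_edges :: "nat \<Rightarrow> gen set" where
  "path_edges n = {(i, i + 1) | i. 1 \<le> i \<and> i < n}"

end

theory Submission
  imports Defs "HOL-Library.Function_Algebras"
begin

text \<open>
  In a truncated point module of degree d, with x_e e_j = c_j(e) e_(j+1), some
  generator acts nontrivially in every degree j < d. The commutation relations force generators
  acting in consecutive degrees to share a vertex. By induction on the gap, no generator acts
  twice: the edges acting between two uses of e are distinct and, closing up with e, form a
  cyclic chain of touching edges, which in a forest is a star; on the module the cyclic relator
  of Fomin and Kirillov for that star has a single nonzero term, a contradiction. Hence d is at
  most the number of edges.

  For the path 1 - 2 - ... - (m+1) let x_(j+1, j+2) act by 1 from degree j. This
  respects all relations of E_n since its coefficients are matrix entries of the Bruhat
  representation of E_n, where x_ij sends a permutation w to w t_ij if this is a cover in the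
  Bruhat order and to 0 otherwise.
\<close>

lemma nc_add_eq_plus: "nc_add p q = p + q"
  by (auto simp: nc_add_def)

lemma fk_ideal_0: "(0 :: 'k::comm_ring_1 ncpoly) \<in> fk_ideal n"
  using fk_ideal.zero[of n] by (simp add: zero_fun_def)

lemma fk_ideal_add: "p \<in> fk_ideal n \<Longrightarrow> q \<in> fk_ideal n \<Longrightarrow> p + q \<in> fk_ideal n"
  using fk_ideal.add by (metis nc_add_eq_plus)

lemma fk_ideal_uminus: "p \<in> fk_ideal n \<Longrightarrow> - p \<in> fk_ideal n"
  using fk_ideal.smult[of p n "-1"] by (simp add: nc_smult_def fun_Compl_def)

lemma fk_ideal_diff: "p \<in> fk_ideal n \<Longrightarrow> q \<in> fk_ideal n \<Longrightarrow> p - q \<in> fk_ideal n"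
  using fk_ideal_add[of p n "- q"] fk_ideal_uminus[of q n] by simp

lemma fk_ideal_sum: "(\<And>a. a \<in> A \<Longrightarrow> f a \<in> fk_ideal n) \<Longrightarrow> sum f A \<in> fk_ideal n"
  by (induction A rule: infinite_finite_induct) (auto intro: fk_ideal_0 fk_ideal_add)

lemma nc_mult_word_left:
  "nc_mult (nc_word u) p = (\<lambda>w. if take (length u) w = u then p (drop (length u) w) else 0)"
proof
  fix w :: "gen list"
  have "nc_mult (nc_word u) p w =
      (\<Sum>i\<le>length w. if i = length u then (if take i w = u then p (drop i w) else 0) else 0)"
    unfolding nc_mult_def nc_word_def by (rule sum.cong) auto
  then show "nc_mult (nc_word u) p w = (if take (length u) w = u then p (drop (length u) w) else 0)"
    by (auto simp: sum.delta)
qed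

lemma nc_mult_word_right:
  "nc_mult p (nc_word v) = (\<lambda>w. if length v \<le> length w \<and> drop (length w - length v) w = v
      then p (take (length w - length v) w) else 0)"
proof
  fix w :: "gen list"
  have "nc_mult p (nc_word v) w = (\<Sum>i\<le>length w. if i = length w - length v then
          (if length v \<le> length w \<and> drop i w = v then p (take i w) else 0) else 0)"
    unfolding nc_mult_def nc_word_def by (rule sum.cong) auto
  then show "nc_mult p (nc_word v) w = (if length v \<le> length w \<and> drop (length w - length v) w = v
      then p (take (length w - length v) w) else 0)"
    by (auto simp: sum.delta)
qed

lemma nc_mult_word_word:
  "nc_mult (nc_word u) (nc_word v) = (nc_word (u @ v) :: 'k::comm_ring_1 ncpoly)"
  unfolding nc_mult_word_left by (auto simp: nc_word_def fun_eq_iff) (metis append_take_drop_id)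

lemma nc_mult_smult_left: "nc_mult (nc_smult c p) q = nc_smult c (nc_mult p q)"
  by (auto simp: nc_mult_def nc_smult_def fun_eq_iff sum_distrib_left mult.assoc)

lemma nc_mult_smult_right: "nc_mult p (nc_smult c q) = nc_smult c (nc_mult p q)"
  by (auto simp: nc_mult_def nc_smult_def fun_eq_iff sum_distrib_left mult_ac)

lemma nc_mult_add_left: "nc_mult (p + q) r = nc_mult p r + nc_mult q r"
  by (auto simp: nc_mult_def fun_eq_iff sum.distrib algebra_simps)

lemma nc_mult_add_right: "nc_mult p (q + r) = nc_mult p q + nc_mult p r"
  by (auto simp: nc_mult_def fun_eq_iff sum.distrib algebra_simps)

lemma nc_mult_diff_left: "nc_mult (p - q) r = nc_mult p r - nc_mult q r"
  by (auto simp: nc_mult_def fun_eq_iff sum_subtractf algebra_simps)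

lemma nc_mult_diff_right: "nc_mult p (q - r) = nc_mult p q - nc_mult p r"
  by (auto simp: nc_mult_def fun_eq_iff sum_subtractf algebra_simps)

lemma nc_mult_sum_left: "nc_mult (sum f A) r = (\<Sum>a\<in>A. nc_mult (f a) r)"
proof (induction A rule: infinite_finite_induct)
  case (insert x F)
  then show ?case by (simp only: sum.insert[OF insert(1,2)] nc_mult_add_left)
qed (auto simp: nc_mult_def)

lemma nc_mult_sum_right: "nc_mult r (sum f A) = (\<Sum>a\<in>A. nc_mult r (f a))"
proof (induction A rule: infinite_finite_induct)
  case (insert x F)
  then show ?case by (simp only: sum.insert[OF insert(1,2)] nc_mult_add_right)
qed (auto simp: nc_mult_def)

lemma sum_nc_word_mult:
  "finite W \<Longrightarrow> (\<Sum>w\<in>W. (nc_word u w :: 'k::comm_ring_1) * F w) = (if u \<in> W then F u else 0)"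
proof -
  assume "finite W"
  have "(\<Sum>w\<in>W. (nc_word u w :: 'k) * F w) = (\<Sum>w\<in>W. if u = w then F w else 0)"
    by (rule sum.cong) (auto simp: nc_word_def)
  then show ?thesis using \<open>finite W\<close> by simp
qed

definition edge_sign :: "nat \<Rightarrow> nat \<Rightarrow> 'k::comm_ring_1" where
  "edge_sign u v = (if u < v then 1 else -1)"

definition edge :: "nat \<Rightarrow> nat \<Rightarrow> gen" where
  "edge u v = (min u v, max u v)"

text \<open>The monomial of a list of arcs (u, v), in the convention x_vu = - x_uv of
  Fomin and Kirillov.\<close>
definition omon :: "(nat \<times> nat) list \<Rightarrow> 'k::comm_ring_1 ncpoly" where
  "omon ps = nc_smult (prod_list (map (\<lambda>(u, v). edge_sign u v) ps))
    (nc_word (map (\<lambda>(u, v). edge u v) ps))"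

definition is_arc :: "nat \<Rightarrow> nat \<times> nat \<Rightarrow> bool" where
  "is_arc n uv \<longleftrightarrow> fst uv \<noteq> snd uv \<and> fst uv \<in> {1..n} \<and> snd uv \<in> {1..n}"

definition sandwich ::
    "(nat \<times> nat) list \<Rightarrow> 'k::comm_ring_1 ncpoly \<Rightarrow> (nat \<times> nat) list \<Rightarrow> 'k ncpoly" where
  "sandwich X p Z = nc_mult (nc_mult (omon X) p) (omon Z)"

definition fk_cong :: "nat \<Rightarrow> 'k::comm_ring_1 ncpoly \<Rightarrow> 'k ncpoly \<Rightarrow> bool" where
  "fk_cong n p q \<longleftrightarrow> p - q \<in> fk_ideal n"

lemma edge_in_gens: "is_arc n (u, v) \<Longrightarrow> edge u v \<in> gens n"
  by (auto simp: is_arc_def edge_def gens_def)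

lemma edge_commute: "edge v u = edge u v"
  by (auto simp: edge_def)

lemma edge_sign_commute: "u \<noteq> v \<Longrightarrow> (edge_sign v u :: 'k::comm_ring_1) = - edge_sign u v"
  by (auto simp: edge_sign_def)

lemma omon_append: "nc_mult (omon X) (omon Z) = (omon (X @ Z) :: 'k::comm_ring_1 ncpoly)"
  unfolding omon_def by (simp add: nc_mult_smult_left nc_mult_smult_right nc_mult_word_word)
    (simp add: nc_smult_def fun_eq_iff)

lemma omon_apply:
  "(omon ps :: 'k::comm_ring_1 ncpoly) w =
     (if w = map (\<lambda>(u, v). edge u v) ps then prod_list (map (\<lambda>(u, v). edge_sign u v) ps) else 0)"
  unfolding omon_def nc_smult_def nc_word_def by simp

lemma omon_reverse_arc:
  assumes "u \<noteq> v"
  shows "(omon (X @ [(v, u)] @ Z) :: 'k::comm_ring_1 ncpoly) = - omon (X @ [(u, v)] @ Z)"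
  unfolding omon_def
  by (simp add: edge_sign_commute[OF assms] edge_commute nc_smult_def fun_eq_iff)

lemma sandwich_omon: "sandwich X (omon m) Z = (omon (X @ m @ Z) :: 'k::comm_ring_1 ncpoly)"
  unfolding sandwich_def by (simp add: omon_append)

lemma sandwich_add: "sandwich X (p + q) Z = sandwich X p Z + sandwich X q Z"
  unfolding sandwich_def by (simp add: nc_mult_add_left nc_mult_add_right)

lemma sandwich_diff: "sandwich X (p - q) Z = sandwich X p Z - sandwich X q Z"
  unfolding sandwich_def by (simp add: nc_mult_diff_left nc_mult_diff_right)

lemma sandwich_sum: "sandwich X (sum f A) Z = (\<Sum>a\<in>A. sandwich X (f a) Z)"
  unfolding sandwich_def by (simp add: nc_mult_sum_left nc_mult_sum_right)

lemma sandwich_in_fk_ideal: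
  assumes "p \<in> fk_ideal n" "\<forall>x\<in>set X. is_arc n x" "\<forall>x\<in>set Z. is_arc n x"
  shows "sandwich X p Z \<in> fk_ideal n"
proof -
  have "set (map (\<lambda>(u, v). edge u v) Y) \<subseteq> gens n" if "\<forall>x\<in>set Y. is_arc n x" for Y
    using that edge_in_gens by fastforce
  then show ?thesis
    unfolding sandwich_def omon_def nc_mult_smult_left nc_mult_smult_right
    by (intro fk_ideal.smult fk_ideal.rmult fk_ideal.lmult assms(1))
      (simp_all add: lists_eq_set assms(2,3))
qed

lemma fk_cong_refl: "fk_cong n p p"
  by (simp add: fk_cong_def fk_ideal_0)

lemma fk_cong_sym: "fk_cong n p q \<Longrightarrow> fk_cong n q p"
  unfolding fk_cong_def using fk_ideal_uminus by fastforce

lemma fk_cong_trans: "fk_cong n p q \<Longrightarrow> fk_cong n q r \<Longrightarrow> fk_cong n p r"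
  unfolding fk_cong_def using fk_ideal_add by fastforce

lemma fk_cong_add: "fk_cong n p p' \<Longrightarrow> fk_cong n q q' \<Longrightarrow> fk_cong n (p + q) (p' + q')"
  unfolding fk_cong_def using fk_ideal_add by (fastforce simp: algebra_simps)

lemma fk_cong_diff: "fk_cong n p p' \<Longrightarrow> fk_cong n q q' \<Longrightarrow> fk_cong n (p - q) (p' - q')"
  unfolding fk_cong_def using fk_ideal_diff by (fastforce simp: algebra_simps)

lemma fk_cong_sum: "(\<And>a. a \<in> A \<Longrightarrow> fk_cong n (f a) (g a)) \<Longrightarrow> fk_cong n (sum f A) (sum g A)"
  unfolding fk_cong_def using fk_ideal_sum[of A "\<lambda>a. f a - g a" n] by (simp add: sum_subtractf)

lemma fk_cong_diff_trans:
  "fk_cong n x (p1 - p2) \<Longrightarrow> fk_cong n p1 q1 \<Longrightarrow> fk_cong n p2 q2 \<Longrightarrow> fk_cong n x (q1 - q2)"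
  by (rule fk_cong_trans, assumption, rule fk_cong_diff)

lemma fk_relator_square:
  "(i, j) \<in> gens n \<Longrightarrow> nc_word [(i, j), (i, j)] \<in> fk_relators n"
  unfolding fk_relators_def by blast

lemma fk_relator_commute:
  "(i, j) \<in> gens n \<Longrightarrow> (k, l) \<in> gens n \<Longrightarrow> {i, j} \<inter> {k, l} = {} \<Longrightarrow>
     nc_sub (nc_word [(i, j), (k, l)]) (nc_word [(k, l), (i, j)]) \<in> fk_relators n"
  unfolding fk_relators_def by blast

lemma fk_relator_triangle_left:
  "1 \<le> i \<Longrightarrow> i < j \<Longrightarrow> j < k \<Longrightarrow> k \<le> n \<Longrightarrow>
    nc_sub (nc_sub (nc_word [(i, j), (j, k)]) (nc_word [(j, k), (i, k)])) (nc_word [(i, k), (i, j)])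
      \<in> fk_relators n"
  unfolding fk_relators_def by blast

lemma fk_relator_triangle_right:
  "1 \<le> i \<Longrightarrow> i < j \<Longrightarrow> j < k \<Longrightarrow> k \<le> n \<Longrightarrow>
    nc_sub (nc_sub (nc_word [(j, k), (i, j)]) (nc_word [(i, k), (j, k)])) (nc_word [(i, j), (i, k)])
      \<in> fk_relators n"
  unfolding fk_relators_def by blast

lemma fk_relatorsE:
  assumes "r \<in> fk_relators n"
  obtains (square) i j where "r = nc_word [(i, j), (i, j)]" "(i, j) \<in> gens n"
  | (commute) i j k l where "r = nc_sub (nc_word [(i, j), (k, l)]) (nc_word [(k, l), (i, j)])"
      "(i, j) \<in> gens n" "(k, l) \<in> gens n" "{i, j} \<inter> {k, l} = {}"
  | (triangle_left) i j k where
      "r = nc_sub (nc_sub (nc_word [(i, j), (j, k)]) (nc_word [(j, k), (i, k)]))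
        (nc_word [(i, k), (i, j)])"
      "1 \<le> i" "i < j" "j < k" "k \<le> n"
  | (triangle_right) i j k where
      "r = nc_sub (nc_sub (nc_word [(j, k), (i, j)]) (nc_word [(i, k), (j, k)]))
        (nc_word [(i, j), (i, k)])"
      "1 \<le> i" "i < j" "j < k" "k \<le> n"
  using assms unfolding fk_relators_def
proof (elim UnE)
  assume "r \<in> {nc_word [(i, j), (i, j)] |i j. (i, j) \<in> gens n}"
  then show thesis using square by blast
next
  assume "r \<in> {nc_sub (nc_word [(i, j), (k, l)]) (nc_word [(k, l), (i, j)]) |i j k l.
      (i, j) \<in> gens n \<and> (k, l) \<in> gens n \<and> {i, j} \<inter> {k, l} = {}}"
  then show thesis using commute by blast
next
  assume "r \<in>
    {nc_sub (nc_sub (nc_word [(i, j), (j, k)]) (nc_word [(j, k), (i, k)]))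
      (nc_word [(i, k), (i, j)])
      |i j k. 1 \<le> i \<and> i < j \<and> j < k \<and> k \<le> n}"
  then show thesis using triangle_left by blast
next
  assume "r \<in>
    {nc_sub (nc_sub (nc_word [(j, k), (i, j)]) (nc_word [(i, k), (j, k)]))
      (nc_word [(i, j), (i, k)])
      |i j k. 1 \<le> i \<and> i < j \<and> j < k \<and> k \<le> n}"
  then show thesis using triangle_right by blast
qed

lemma omon_square_in_fk_ideal:
  assumes "is_arc n (a, b)"
  shows "(omon [(a, b), (a, b)] :: 'k::comm_ring_1 ncpoly) \<in> fk_ideal n"
proof -
  obtain i j where ij: "edge a b = (i, j)" by fastforce
  then have "(nc_word [(i, j), (i, j)] :: 'k ncpoly) \<in> fk_ideal n"
    using edge_in_gens[OF assms] by (auto intro: fk_ideal.rel fk_relator_square)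
  then show ?thesis
    unfolding omon_def using ij by (auto intro: fk_ideal.smult)
qed

lemma omon_commute_in_fk_ideal:
  assumes "is_arc n (p, q)" "is_arc n (r, s)" "{p, q} \<inter> {r, s} = {}"
  shows "(omon [(p, q), (r, s)] - omon [(r, s), (p, q)] :: 'k::comm_ring_1 ncpoly) \<in> fk_ideal n"
proof -
  obtain i j where ij: "edge p q = (i, j)" by fastforce
  obtain k l where kl: "edge r s = (k, l)" by fastforce
  have "{i, j} = {p, q}" "{k, l} = {r, s}"
    using ij kl by (auto simp: edge_def min_def max_def split: if_splits)
  then have "(nc_sub (nc_word [(i, j), (k, l)]) (nc_word [(k, l), (i, j)]) :: 'k ncpoly)
      \<in> fk_relators n"
    using assms(3) edge_in_gens[OF assms(1)] edge_in_gens[OF assms(2)] ij kl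
    by (intro fk_relator_commute) simp_all
  then have "nc_smult (edge_sign p q * edge_sign r s)
      (nc_sub (nc_word [(i, j), (k, l)]) (nc_word [(k, l), (i, j)]) :: 'k ncpoly) \<in> fk_ideal n"
    by (intro fk_ideal.smult fk_ideal.rel)
  then show ?thesis
    unfolding omon_def using ij kl
    by (simp add: nc_smult_def nc_sub_def fun_diff_def algebra_simps)
qed

text \<open>With x_vu = - x_uv both families of three-term relations of E_n take the
  rotation-invariant form below.\<close>
definition triangle_relator :: "nat \<Rightarrow> nat \<Rightarrow> nat \<Rightarrow> 'k::comm_ring_1 ncpoly" where
  "triangle_relator a b c = omon [(a, b), (b, c)] + omon [(b, c), (c, a)] + omon [(c, a), (a, b)]"

lemma triangle_relator_rotate: "triangle_relator a b c = triangle_relator b c a"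
  unfolding triangle_relator_def by (simp add: ac_simps)

lemma triangle_relator_in_fk_ideal_min:
  assumes "a < b" "a < c" "b \<noteq> c" "1 \<le> a" "b \<le> n" "c \<le> n"
  shows "(triangle_relator a b c :: 'k::comm_ring_1 ncpoly) \<in> fk_ideal n"
proof (cases "b < c")
  case True
  have "(nc_sub (nc_sub (nc_word [(a, b), (b, c)]) (nc_word [(b, c), (a, c)]))
      (nc_word [(a, c), (a, b)]) :: 'k ncpoly) \<in> fk_relators n"
    using assms True by (intro fk_relator_triangle_left) simp_all
  moreover have "nc_sub (nc_sub (nc_word [(a, b), (b, c)]) (nc_word [(b, c), (a, c)]))
      (nc_word [(a, c), (a, b)]) = (triangle_relator a b c :: 'k ncpoly)"
    unfolding triangle_relator_def omon_def using assms True
    by (auto simp: nc_smult_def nc_sub_def fun_eq_iff edge_sign_def edge_def)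
  ultimately show ?thesis by (metis fk_ideal.rel)
next
  case False
  then have "c < b" using assms by simp
  have "(nc_sub (nc_sub (nc_word [(c, b), (a, c)]) (nc_word [(a, b), (c, b)]))
      (nc_word [(a, c), (a, b)]) :: 'k ncpoly) \<in> fk_relators n"
    using assms \<open>c < b\<close> by (intro fk_relator_triangle_right) simp_all
  moreover have "nc_sub (nc_sub (nc_word [(c, b), (a, c)]) (nc_word [(a, b), (c, b)]))
      (nc_word [(a, c), (a, b)]) = (triangle_relator a b c :: 'k ncpoly)"
    unfolding triangle_relator_def omon_def using assms \<open>c < b\<close>
    by (auto simp: nc_smult_def nc_sub_def fun_eq_iff edge_sign_def edge_def)
  ultimately show ?thesis by (metis fk_ideal.rel)
qed

lemma triangle_relator_in_fk_ideal:
  assumes "a \<noteq> b" "b \<noteq> c" "a \<noteq> c" "a \<in> {1..n}" "b \<in> {1..n}" "c \<in> {1..n}"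
  shows "(triangle_relator a b c :: 'k::comm_ring_1 ncpoly) \<in> fk_ideal n"
proof -
  have rot: "triangle_relator a b c = triangle_relator b c a"
    "triangle_relator a b c = triangle_relator c a b"
    by (metis triangle_relator_rotate)+
  consider "a < b \<and> a < c" | "b < a \<and> b < c" | "c < a \<and> c < b" using assms by linarith
  then show ?thesis
  proof cases
    case 1
    then show ?thesis using triangle_relator_in_fk_ideal_min[of a b c n] assms by auto
  next
    case 2
    then show ?thesis unfolding rot(1)
      using triangle_relator_in_fk_ideal_min[of b c a n] assms by auto
  next
    case 3
    then show ?thesis unfolding rot(2)
      using triangle_relator_in_fk_ideal_min[of c a b n] assms by auto
  qed
qed

lemma fk_cong_move_disjoint:
  assumes z: "is_arc n z"
    and Q: "\<forall>q\<in>set Q. is_arc n q \<and> {fst q, snd q} \<inter> {fst z, snd z} = {}"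
    and X: "\<forall>x\<in>set X. is_arc n x" and Z: "\<forall>x\<in>set Z. is_arc n x"
  shows "fk_cong n (omon (X @ [z] @ Q @ Z) :: 'k::comm_ring_1 ncpoly) (omon (X @ Q @ [z] @ Z))"
  using Q X
proof (induction Q arbitrary: X)
  case Nil
  then show ?case by (simp add: fk_cong_refl)
next
  case (Cons q Q)
  have "(omon [z, q] - omon [q, z] :: 'k ncpoly) \<in> fk_ideal n"
    using omon_commute_in_fk_ideal[of n "fst z" "snd z" "fst q" "snd q"] z Cons.prems by simp
  then have "sandwich X (omon [z, q] - omon [q, z] :: 'k ncpoly) (Q @ Z) \<in> fk_ideal n"
    by (rule sandwich_in_fk_ideal) (use Cons.prems Z in auto)
  then have "fk_cong n (omon (X @ [z, q] @ Q @ Z) :: 'k ncpoly) (omon (X @ [q, z] @ Q @ Z))"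
    unfolding fk_cong_def sandwich_diff sandwich_omon .
  moreover have
    "fk_cong n (omon ((X @ [q]) @ [z] @ Q @ Z) :: 'k ncpoly) (omon ((X @ [q]) @ Q @ [z] @ Z))"
    by (rule Cons.IH) (use Cons.prems in auto)
  ultimately show ?case by (auto intro: fk_cong_trans)
qed

lemma fk_cong_triangle_exchange:
  assumes "a \<noteq> b" "a \<noteq> c" "b \<noteq> c" "a \<in> {1..n}" "b \<in> {1..n}" "c \<in> {1..n}"
    "\<forall>x\<in>set X. is_arc n x" "\<forall>x\<in>set Z. is_arc n x"
  shows "fk_cong n (omon (X @ [(a, c), (a, b)] @ Z) :: 'k::comm_ring_1 ncpoly)
             (omon (X @ [(a, b), (b, c)] @ Z) - omon (X @ [(b, c), (a, c)] @ Z))"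
proof -
  have "(omon [(b, c), (c, a)] :: 'k ncpoly) = - omon [(b, c), (a, c)]"
    using omon_reverse_arc[of a c "[(b, c)]" "[]"] assms by simp
  moreover have "(omon [(c, a), (a, b)] :: 'k ncpoly) = - omon [(a, c), (a, b)]"
    using omon_reverse_arc[of a c "[]" "[(a, b)]"] assms by simp
  ultimately have "(triangle_relator a b c :: 'k ncpoly) =
      omon [(a, b), (b, c)] - omon [(b, c), (a, c)] - omon [(a, c), (a, b)]"
    unfolding triangle_relator_def by simp
  moreover have "(triangle_relator a b c :: 'k ncpoly) \<in> fk_ideal n"
    by (rule triangle_relator_in_fk_ideal) (use assms in auto)
  ultimately have "sandwich X (omon [(a, b), (b, c)] - omon [(b, c), (a, c)] - omon [(a, c), (a, b)]
      :: 'k ncpoly) Z \<in> fk_ideal n"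
    using sandwich_in_fk_ideal assms(7,8) by metis
  then have "- (omon (X @ [(a, b), (b, c)] @ Z) - omon (X @ [(b, c), (a, c)] @ Z)
      - omon (X @ [(a, c), (a, b)] @ Z) :: 'k ncpoly) \<in> fk_ideal n"
    unfolding sandwich_diff sandwich_omon by (rule fk_ideal_uminus)
  then show ?thesis unfolding fk_cong_def by (simp add: algebra_simps)
qed

section \<open>Cyclic relators around a vertex\<close>

definition cyclic_word :: "'a list \<Rightarrow> nat \<Rightarrow> 'a list" where
  "cyclic_word bs t = rotate t bs @ [bs ! t]"

text \<open>For k = 1 it is
  x_ab^2, for k = 2 the braid relation.\<close>
definition star_cycle_relator :: "nat \<Rightarrow> nat list \<Rightarrow> 'k::comm_ring_1 ncpoly" where
  "star_cycle_relator a bs = (\<Sum>t<length bs. omon (map (Pair a) (cyclic_word bs t)))"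

lemma set_cyclic_word: "t < length bs \<Longrightarrow> set (cyclic_word bs t) \<subseteq> set bs"
  unfolding cyclic_word_def by auto

lemma cyclic_word_0: "bs \<noteq> [] \<Longrightarrow> cyclic_word bs 0 = bs @ [hd bs]"
  unfolding cyclic_word_def by (simp add: hd_conv_nth)

lemma cyclic_word_split_Suc:
  assumes "t < length mid"
  shows "cyclic_word (b0 # mid @ [bl]) (Suc t) = drop t mid @ [bl, b0] @ take t mid @ [mid ! t]"
    and "cyclic_word (b0 # mid) (Suc t) = drop t mid @ [b0] @ take t mid @ [mid ! t]"
    and "cyclic_word (mid @ [bl]) t = drop t mid @ [bl] @ take t mid @ [mid ! t]"
  using assms unfolding cyclic_word_def rotate_drop_take by (simp_all add: nth_append)

lemma cyclic_word_last:
  "cyclic_word (b0 # mid @ [bl]) (Suc (length mid)) = [bl, b0] @ mid @ [bl]"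
  "cyclic_word (mid @ [bl]) (length mid) = [bl] @ mid @ [bl]"
  unfolding cyclic_word_def rotate_drop_take by (simp_all add: nth_append)

text \<open>The induction step for the cyclic relators: cutting the cycle a b_0 ... b_l along the
  chord z = (b_0, b_l) gives S(b_0 ... b_l) = S(b_0 ... b_(l-1)) x_z - x_z S(b_1 ... b_l) modulo
  the relations; termwise this is one triangle relation on a b_0 b_l followed by commuting x_z
  past arcs disjoint from it.\<close>
context
  fixes n a b0 bl :: nat and mid :: "nat list"
  assumes bs_distinct: "distinct (b0 # mid @ [bl])"
    and a_range: "a \<in> {1..n}" and a_notin: "a \<notin> set (b0 # mid @ [bl])"
    and bs_range: "set (b0 # mid @ [bl]) \<subseteq> {1..n}"
begin

lemma star_arcs_are_arcs:
  "set xs \<subseteq> set (b0 # mid @ [bl]) \<Longrightarrow> \<forall>x\<in>set (map (Pair a) xs). is_arc n x"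
  using a_range a_notin bs_range by (auto simp: is_arc_def)

lemma chord_is_arc: "is_arc n (b0, bl)"
  using bs_distinct bs_range by (auto simp: is_arc_def)

lemma star_arcs_disjoint_chord:
  "set xs \<subseteq> set mid \<Longrightarrow>
     \<forall>q\<in>set (map (Pair a) xs). is_arc n q \<and> {fst q, snd q} \<inter> {fst (b0, bl), snd (b0, bl)} = {}"
  using star_arcs_are_arcs[of xs] bs_distinct a_notin by auto

abbreviation (input) chord_word :: "'k::comm_ring_1 ncpoly" where
  "chord_word \<equiv> omon ([(a, b0), (b0, bl)] @ map (Pair a) mid @ [(a, bl)])"

lemma star_cycle_first_term:
  "fk_cong n (omon (map (Pair a) (cyclic_word (b0 # mid @ [bl]) 0)) :: 'k::comm_ring_1 ncpoly)
     (sandwich [] (omon (map (Pair a) (cyclic_word (b0 # mid) 0))) [(b0, bl)] - chord_word)"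
proof (rule fk_cong_diff_trans)
  show "fk_cong n (omon (map (Pair a) (cyclic_word (b0 # mid @ [bl]) 0)) :: 'k ncpoly)
      (omon (map (Pair a) (b0 # mid) @ [(a, b0), (b0, bl)] @ [])
        - omon (map (Pair a) (b0 # mid) @ [(b0, bl), (a, bl)] @ []))"
    using fk_cong_triangle_exchange[of a b0 bl n "map (Pair a) (b0 # mid)" "[]"]
      star_arcs_are_arcs[of "b0 # mid"] a_range a_notin bs_distinct bs_range
    by (auto simp: cyclic_word_def)
  show "fk_cong n (omon (map (Pair a) (b0 # mid) @ [(a, b0), (b0, bl)] @ []) :: 'k ncpoly)
      (sandwich [] (omon (map (Pair a) (cyclic_word (b0 # mid) 0))) [(b0, bl)])"
    by (simp add: sandwich_omon cyclic_word_def fk_cong_refl)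
  show "fk_cong n (omon (map (Pair a) (b0 # mid) @ [(b0, bl), (a, bl)] @ []) :: 'k ncpoly)
      chord_word"
    using fk_cong_sym[OF fk_cong_move_disjoint[OF chord_is_arc star_arcs_disjoint_chord[of mid],
        of "[(a, b0)]" "[(a, bl)]"]] star_arcs_are_arcs[of "[b0]"] star_arcs_are_arcs[of "[bl]"]
    by simp
qed

lemma star_cycle_last_term:
  "fk_cong n (omon (map (Pair a) (cyclic_word (b0 # mid @ [bl]) (Suc (length mid))))
       :: 'k::comm_ring_1 ncpoly)
     (chord_word
       - sandwich [(b0, bl)] (omon (map (Pair a) (cyclic_word (mid @ [bl]) (length mid)))) [])"
proof (rule fk_cong_diff_trans)
  show "fk_cong n
      (omon (map (Pair a) (cyclic_word (b0 # mid @ [bl]) (Suc (length mid)))) :: 'k ncpoly)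
      (omon ([] @ [(a, b0), (b0, bl)] @ map (Pair a) (mid @ [bl]))
        - omon ([] @ [(b0, bl), (a, bl)] @ map (Pair a) (mid @ [bl])))"
    using fk_cong_triangle_exchange[of a b0 bl n "[]" "map (Pair a) (mid @ [bl])"]
      star_arcs_are_arcs[of "mid @ [bl]"] a_range a_notin bs_distinct bs_range
    by (auto simp: cyclic_word_last)
  show "fk_cong n (omon ([] @ [(a, b0), (b0, bl)] @ map (Pair a) (mid @ [bl])) :: 'k ncpoly)
      chord_word"
    by (simp add: fk_cong_refl)
  show "fk_cong n (omon ([] @ [(b0, bl), (a, bl)] @ map (Pair a) (mid @ [bl])) :: 'k ncpoly)
      (sandwich [(b0, bl)] (omon (map (Pair a) (cyclic_word (mid @ [bl]) (length mid)))) [])"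
    by (simp add: sandwich_omon cyclic_word_last fk_cong_refl)
qed

lemma star_cycle_middle_term:
  assumes t: "t < length mid"
  shows "fk_cong n
     (omon (map (Pair a) (cyclic_word (b0 # mid @ [bl]) (Suc t))) :: 'k::comm_ring_1 ncpoly)
     (sandwich [] (omon (map (Pair a) (cyclic_word (b0 # mid) (Suc t)))) [(b0, bl)]
      - sandwich [(b0, bl)] (omon (map (Pair a) (cyclic_word (mid @ [bl]) t))) [])"
proof -
  define P where "P = map (Pair a) (drop t mid)"
  define Q where "Q = map (Pair a) (take t mid @ [mid ! t])"
  have P_arcs: "\<forall>x\<in>set P. is_arc n x" and Q_arcs: "\<forall>x\<in>set Q. is_arc n x"
    using star_arcs_are_arcs[of "drop t mid"] star_arcs_are_arcs[of "take t mid @ [mid ! t]"] t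
    unfolding P_def Q_def by (auto dest: in_set_dropD in_set_takeD)
  have P_disj: "\<forall>q\<in>set P. is_arc n q \<and> {fst q, snd q} \<inter> {fst (b0, bl), snd (b0, bl)} = {}"
    using star_arcs_disjoint_chord[of "drop t mid"] unfolding P_def by (auto dest: in_set_dropD)
  have Q_disj: "\<forall>q\<in>set Q. is_arc n q \<and> {fst q, snd q} \<inter> {fst (b0, bl), snd (b0, bl)} = {}"
    using star_arcs_disjoint_chord[of "take t mid @ [mid ! t]"] t unfolding Q_def
    by (auto dest: in_set_takeD)
  have arcs: "is_arc n (a, b0)" "is_arc n (a, bl)"
    using star_arcs_are_arcs[of "[b0, bl]"] by auto
  show ?thesis
  proof (rule fk_cong_diff_trans)
    show "fk_cong n (omon (map (Pair a) (cyclic_word (b0 # mid @ [bl]) (Suc t))) :: 'k ncpoly)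
        (omon (P @ [(a, b0), (b0, bl)] @ Q) - omon (P @ [(b0, bl), (a, bl)] @ Q))"
      using fk_cong_triangle_exchange[of a b0 bl n P Q] P_arcs Q_arcs a_range a_notin bs_distinct
        bs_range
      unfolding P_def Q_def cyclic_word_split_Suc(1)[OF t] by simp
    show "fk_cong n (omon (P @ [(a, b0), (b0, bl)] @ Q) :: 'k ncpoly)
        (sandwich [] (omon (map (Pair a) (cyclic_word (b0 # mid) (Suc t)))) [(b0, bl)])"
      using fk_cong_move_disjoint[OF chord_is_arc Q_disj, of "P @ [(a, b0)]" "[]"] P_arcs arcs
      unfolding sandwich_omon cyclic_word_split_Suc(2)[OF t] P_def Q_def by simp
    show "fk_cong n (omon (P @ [(b0, bl), (a, bl)] @ Q) :: 'k ncpoly)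
        (sandwich [(b0, bl)] (omon (map (Pair a) (cyclic_word (mid @ [bl]) t))) [])"
      using fk_cong_sym[OF fk_cong_move_disjoint[OF chord_is_arc P_disj, of "[]" "(a, bl) # Q"]]
        Q_arcs arcs
      unfolding sandwich_omon cyclic_word_split_Suc(3)[OF t] P_def Q_def by simp
  qed
qed

lemma star_cycle_relator_split:
  "fk_cong n (star_cycle_relator a (b0 # mid @ [bl]) :: 'k::comm_ring_1 ncpoly)
     (sandwich [] (star_cycle_relator a (b0 # mid)) [(b0, bl)]
      - sandwich [(b0, bl)] (star_cycle_relator a (mid @ [bl])) [])"
proof -
  define k where "k = length mid"
  define f where "f t = (omon (map (Pair a) (cyclic_word (b0 # mid @ [bl]) t)) :: 'k ncpoly)" for t
  define g where "g t = (omon (map (Pair a) (cyclic_word (b0 # mid) t)) :: 'k ncpoly)" for t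
  define h where "h t = (omon (map (Pair a) (cyclic_word (mid @ [bl]) t)) :: 'k ncpoly)" for t
  have "star_cycle_relator a (b0 # mid @ [bl]) = (\<Sum>t<Suc (Suc k). f t)"
    unfolding star_cycle_relator_def f_def k_def by simp
  also have "\<dots> = f 0 + (\<Sum>t<k. f (Suc t)) + f (Suc k)"
    by (simp only: sum.lessThan_Suc[of f "Suc k"] sum.lessThan_Suc_shift[of f k])
  finally have split:
    "star_cycle_relator a (b0 # mid @ [bl]) = f 0 + (\<Sum>t<k. f (Suc t)) + f (Suc k)" .
  have telescope: "(sandwich [] (g 0) [(b0, bl)] - chord_word)
      + (\<Sum>t<k. sandwich [] (g (Suc t)) [(b0, bl)] - sandwich [(b0, bl)] (h t) [])
      + (chord_word - sandwich [(b0, bl)] (h k) [])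
    = sandwich [] (star_cycle_relator a (b0 # mid)) [(b0, bl)]
      - sandwich [(b0, bl)] (star_cycle_relator a (mid @ [bl])) []"
  proof -
    have "star_cycle_relator a (b0 # mid) = g 0 + (\<Sum>t<k. g (Suc t))"
      unfolding star_cycle_relator_def g_def k_def
      by (simp add: sum.lessThan_Suc_shift del: sum.lessThan_Suc)
    moreover have "star_cycle_relator a (mid @ [bl]) = (\<Sum>t<k. h t) + h k"
      unfolding star_cycle_relator_def h_def k_def by simp
    ultimately show ?thesis
      by (simp add: sandwich_add sandwich_sum sum_subtractf algebra_simps)
  qed
  have "fk_cong n (f 0 + (\<Sum>t<k. f (Suc t)) + f (Suc k))
      ((sandwich [] (g 0) [(b0, bl)] - chord_word)
      + (\<Sum>t<k. sandwich [] (g (Suc t)) [(b0, bl)] - sandwich [(b0, bl)] (h t) [])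
      + (chord_word - sandwich [(b0, bl)] (h k) []))"
  proof (intro fk_cong_add fk_cong_sum)
    show "fk_cong n (f 0) (sandwich [] (g 0) [(b0, bl)] - chord_word)"
      unfolding f_def g_def by (rule star_cycle_first_term)
    show "fk_cong n (f (Suc k)) (chord_word - sandwich [(b0, bl)] (h k) [])"
      unfolding f_def h_def k_def by (rule star_cycle_last_term)
    show "fk_cong n (f (Suc t)) (sandwich [] (g (Suc t)) [(b0, bl)] - sandwich [(b0, bl)] (h t) [])"
      if "t \<in> {..<k}" for t
      unfolding f_def g_def h_def using that k_def by (intro star_cycle_middle_term) simp
  qed
  then show ?thesis
    unfolding split telescope .
qed

end

lemma star_cycle_relator_in_fk_ideal:
  assumes "a \<in> {1..n}" "set bs \<subseteq> {1..n}" "a \<notin> set bs" "distinct bs" "bs \<noteq> []"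
  shows "(star_cycle_relator a bs :: 'k::comm_ring_1 ncpoly) \<in> fk_ideal n"
  using assms
proof (induction "length bs" arbitrary: bs rule: less_induct)
  case less
  show ?case
  proof (cases "length bs = 1")
    case True
    then obtain b where bs: "bs = [b]" by (metis One_nat_def length_0_conv length_Suc_conv)
    then have "is_arc n (a, b)" using less.prems by (auto simp: is_arc_def)
    then show ?thesis
      using omon_square_in_fk_ideal unfolding bs star_cycle_relator_def cyclic_word_def by simp
  next
    case False
    obtain b0 rest where "bs = b0 # rest" "rest \<noteq> []" using \<open>bs \<noteq> []\<close> False by (cases bs) auto
    then obtain mid bl where bs: "bs = b0 # mid @ [bl]" using append_butlast_last_id by metis
    have "(star_cycle_relator a (b0 # mid) :: 'k ncpoly) \<in> fk_ideal n"
      "(star_cycle_relator a (mid @ [bl]) :: 'k ncpoly) \<in> fk_ideal n"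
      by (rule less.hyps; use less.prems bs in auto)+
    then have "sandwich [] (star_cycle_relator a (b0 # mid)) [(b0, bl)]
        - sandwich [(b0, bl)] (star_cycle_relator a (mid @ [bl])) []
        \<in> (fk_ideal n :: 'k ncpoly set)"
      using chord_is_arc[of b0 mid bl a n] less.prems
      by (intro fk_ideal_diff sandwich_in_fk_ideal) (auto simp: bs)
    moreover have "fk_cong n (star_cycle_relator a bs :: 'k ncpoly)
        (sandwich [] (star_cycle_relator a (b0 # mid)) [(b0, bl)]
         - sandwich [(b0, bl)] (star_cycle_relator a (mid @ [bl])) [])"
      unfolding bs by (rule star_cycle_relator_split) (use less.prems bs in auto)
    ultimately show ?thesis
      unfolding fk_cong_def by (metis diff_add_cancel fk_ideal_add)
  qed
qed

section \<open>Closed trails in forests\<close>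

definition closed_trail :: "gen set \<Rightarrow> (nat \<Rightarrow> nat) \<Rightarrow> nat \<Rightarrow> bool" where
  "closed_trail E w L \<longleftrightarrow> 1 \<le> L \<and> w L = w 0 \<and>
     (\<forall>i<L. w i = w (Suc i) \<or> adj E (w i) (w (Suc i))) \<and>
     (\<forall>i<L. \<forall>j<L. i \<noteq> j \<and> w i \<noteq> w (Suc i) \<and> w j \<noteq> w (Suc j) \<longrightarrow>
         edge (w i) (w (Suc i)) \<noteq> edge (w j) (w (Suc j))) \<and>
     (\<exists>i<L. w i \<noteq> w (Suc i))"

lemma closed_trail_skip_pause:
  assumes trail: "closed_trail E w L" and i: "i < L" "w i = w (Suc i)"
  shows "closed_trail E (\<lambda>j. if j \<le> i then w j else w (Suc j)) (L - 1)"
proof -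
  define w' where "w' j = (if j \<le> i then w j else w (Suc j))" for j
  define \<sigma> where "\<sigma> j = (if j < i then j else Suc j)" for j
  have step: "w' j = w (\<sigma> j) \<and> w' (Suc j) = w (Suc (\<sigma> j))" for j
    unfolding w'_def \<sigma>_def using i by (cases "j < i"; cases "j = i") auto
  have \<sigma>_less: "j < L - 1 \<Longrightarrow> \<sigma> j < L" for j unfolding \<sigma>_def by auto
  obtain k where k: "k < L" "w k \<noteq> w (Suc k)"
    using trail unfolding closed_trail_def by blast
  have "k \<noteq> i" using i k by auto
  have "closed_trail E w' (L - 1)"
    unfolding closed_trail_def
  proof (intro conjI allI impI)
    show "1 \<le> L - 1" using i k \<open>k \<noteq> i\<close> by linarith
    have "w L = w 0" using trail unfolding closed_trail_def by blast
    show "w' (L - 1) = w' 0"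
    proof (cases "L - 1 \<le> i")
      case True
      then have "Suc i = L" using i by linarith
      then have "i = L - 1" by simp
      then show ?thesis using i \<open>w L = w 0\<close> \<open>Suc i = L\<close> unfolding w'_def by simp
    next
      case False
      then show ?thesis using \<open>w L = w 0\<close> unfolding w'_def by simp
    qed
  next
    fix j assume "j < L - 1"
    then show "w' j = w' (Suc j) \<or> adj E (w' j) (w' (Suc j))"
      using trail step \<sigma>_less unfolding closed_trail_def by metis
  next
    fix j j' assume "j < L - 1" "j' < L - 1"
      and "j \<noteq> j' \<and> w' j \<noteq> w' (Suc j) \<and> w' j' \<noteq> w' (Suc j')"
    moreover have "\<sigma> j \<noteq> \<sigma> j'" if "j \<noteq> j'" using that unfolding \<sigma>_def by auto
    ultimately show "edge (w' j) (w' (Suc j)) \<noteq> edge (w' j') (w' (Suc j'))"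
      using trail step \<sigma>_less unfolding closed_trail_def by metis
  next
    have "\<sigma> (if k < i then k else k - 1) = k" "(if k < i then k else k - 1) < L - 1"
      unfolding \<sigma>_def using k \<open>k \<noteq> i\<close> i by auto
    then show "\<exists>j<L - 1. w' j \<noteq> w' (Suc j)" using step k by metis
  qed
  then show ?thesis unfolding w'_def .
qed

lemma closed_trail_shortcut:
  assumes trail: "closed_trail E w L" and no_pause: "\<forall>i<L. w i \<noteq> w (Suc i)"
    and ab: "a < b" "b \<le> L" "w a = w b"
  shows "closed_trail E (\<lambda>j. w (a + j)) (b - a)"
  using assms unfolding closed_trail_def by (auto intro!: exI[of _ 0])

lemma closed_trail_not_injective:
  assumes trail: "closed_trail E w L" and no_pause: "\<forall>i<L. w i \<noteq> w (Suc i)"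
    and acyclic: "acyclic_graph E"
  shows "\<not> inj_on w {..<L}"
proof
  assume inj: "inj_on w {..<L}"
  have adjs: "adj E (w i) (w (Suc i))" if "i < L" for i
    using trail no_pause that unfolding closed_trail_def by blast
  have "1 \<le> L" "w L = w 0" using trail unfolding closed_trail_def by auto
  then consider "L = 1" | "L = 2" | "3 \<le> L" by linarith
  then show False
  proof cases
    case 1
    then show False using adjs[of 0] \<open>w L = w 0\<close> by (simp add: adj_def)
  next
    case 2
    then have "edge (w 0) (w 1) \<noteq> edge (w 1) (w 2)"
      using trail no_pause unfolding closed_trail_def
      by (metis less_2_cases_iff one_neq_zero One_nat_def numeral_2_eq_2)
    then show False using \<open>w L = w 0\<close> 2 by (simp add: edge_commute)
  next
    case 3
    define vs where "vs = map w [0..<L]"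
    have "3 \<le> length vs" "distinct vs"
      using 3 inj unfolding vs_def by (auto simp: distinct_map lessThan_atLeast0)
    moreover have "adj E (vs ! i) (vs ! ((i + 1) mod length vs))" if "i < length vs" for i
    proof (cases "Suc i < L")
      case True
      then show ?thesis using adjs[of i] unfolding vs_def by simp
    next
      case False
      then have "Suc i = L" using that unfolding vs_def by simp
      then show ?thesis using adjs[of i] \<open>w L = w 0\<close> unfolding vs_def by auto
    qed
    ultimately show False using acyclic unfolding acyclic_graph_def by blast
  qed
qed

lemma acyclic_no_closed_trail:
  assumes "acyclic_graph E"
  shows "\<not> closed_trail E w L"
proof (induction L arbitrary: w rule: less_induct)
  case (less L)
  show ?case
  proof
    assume trail: "closed_trail E w L"
    then have L: "1 \<le> L" unfolding closed_trail_def by blast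
    show False
    proof (cases "\<exists>i<L. w i = w (Suc i)")
      case True
      then obtain i where "i < L" "w i = w (Suc i)" by blast
      then show False using closed_trail_skip_pause[OF trail] less.IH[of "L - 1"] L by auto
    next
      case False
      then have no_pause: "\<forall>i<L. w i \<noteq> w (Suc i)" by blast
      obtain a b where ab: "a < b" "b < L" "w a = w b"
        using closed_trail_not_injective[OF trail no_pause assms]
        unfolding inj_on_def by (metis lessThan_iff linorder_neqE_nat)
      then have "closed_trail E (\<lambda>j. w (a + j)) (b - a)"
        by (intro closed_trail_shortcut[OF trail no_pause]) auto
      then show False using less.IH[of "b - a"] ab by auto
    qed
  qed
qed

definition ends :: "gen \<Rightarrow> nat set" where
  "ends e = {fst e, snd e}"

lemma closed_trail_through_meeting_points:
  assumes E: "\<forall>e\<in>E. fst e < snd e" and g: "1 \<le> g" and f: "\<forall>s<g. f s \<in> E"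
    and inj: "inj_on f {..<g}"
    and u: "\<forall>s<g. u s \<in> ends (f s) \<and> u s \<in> ends (f (Suc s mod g))"
    and moves: "\<exists>i<g. u (i mod g) \<noteq> u (Suc i mod g)"
  shows "closed_trail E (\<lambda>s. u (s mod g)) g"
proof -
  define w where "w s = u (s mod g)" for s
  have w_edge: "edge (w i) (w (Suc i)) = f (Suc i mod g)" if "i < g" "w i \<noteq> w (Suc i)" for i
  proof -
    have "w i \<in> ends (f (Suc i mod g))" "w (Suc i) \<in> ends (f (Suc i mod g))"
      unfolding w_def using u[rule_format, of i] u[rule_format, of "Suc i mod g"] that g by auto
    moreover have "fst (f (Suc i mod g)) < snd (f (Suc i mod g))"
      using f E g by auto
    ultimately show ?thesis using that(2) unfolding ends_def edge_def
      by (cases "f (Suc i mod g)") (auto simp: min_def max_def)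
  qed
  have "closed_trail E w g"
    unfolding closed_trail_def
  proof (intro conjI allI impI)
    show "1 \<le> g" "w g = w 0" using g unfolding w_def by auto
  next
    fix i assume i: "i < g"
    show "w i = w (Suc i) \<or> adj E (w i) (w (Suc i))"
    proof (cases "w i = w (Suc i)")
      case False
      have "edge (w i) (w (Suc i)) \<in> E" using w_edge[OF i False] f g by simp
      then show ?thesis using False by (simp add: adj_def edge_def)
    qed simp
  next
    fix i j assume ij: "i < g" "j < g" "i \<noteq> j \<and> w i \<noteq> w (Suc i) \<and> w j \<noteq> w (Suc j)"
    have "Suc x mod g = (if Suc x = g then 0 else Suc x)" if "x < g" for x
      using that by auto
    then have "Suc i mod g \<noteq> Suc j mod g" using ij by auto
    moreover have "Suc i mod g < g" "Suc j mod g < g" using g by auto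
    ultimately have "f (Suc i mod g) \<noteq> f (Suc j mod g)" using inj unfolding inj_on_def by blast
    then show "edge (w i) (w (Suc i)) \<noteq> edge (w j) (w (Suc j))"
      using w_edge ij by simp
  next
    show "\<exists>i<g. w i \<noteq> w (Suc i)" using moves unfolding w_def .
  qed
  then show ?thesis unfolding w_def .
qed

text \<open>The shared vertices of consecutive edges form a closed walk whose proper steps run along
  distinct edges of the family; in a forest it must stay at one vertex.\<close>
lemma acyclic_edge_cycle_common_vertex:
  assumes acyclic: "acyclic_graph E" and E: "\<forall>e\<in>E. fst e < snd e"
    and g: "1 \<le> g" and f: "\<forall>s<g. f s \<in> E" and inj: "inj_on f {..<g}"
    and meet: "\<forall>s<g. ends (f s) \<inter> ends (f (Suc s mod g)) \<noteq> {}"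
  shows "\<exists>v. \<forall>s<g. v \<in> ends (f s)"
proof -
  define u where "u s = (SOME v. v \<in> ends (f s) \<and> v \<in> ends (f (Suc s mod g)))" for s
  have u: "u s \<in> ends (f s) \<and> u s \<in> ends (f (Suc s mod g))" if "s < g" for s
    unfolding u_def using meet that by (metis (no_types, lifting) disjoint_iff someI_ex)
  then have u_all: "\<forall>s<g. u s \<in> ends (f s) \<and> u s \<in> ends (f (Suc s mod g))" by blast
  have stays: "u (i mod g) = u (Suc i mod g)" if "i < g" for i
  proof (rule ccontr)
    assume "u (i mod g) \<noteq> u (Suc i mod g)"
    with that have "closed_trail E (\<lambda>s. u (s mod g)) g"
      by (intro closed_trail_through_meeting_points[OF E g f inj u_all] exI[of _ i] conjI)
    then show False by (simp add: acyclic_no_closed_trail[OF acyclic])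
  qed
  have const: "u (s mod g) = u 0" if "s \<le> g" for s
    using that
  proof (induction s)
    case (Suc s)
    then show ?case using stays[of s, symmetric] by simp
  qed simp
  have "u s = u 0" if "s < g" for s
    using const[of s] that by simp
  then show ?thesis using u by metis
qed

section \<open>Truncated point modules over forests\<close>

lemma sum_fun_apply: "(sum f A) x = (\<Sum>a\<in>A. f a x)"
  by (induction A rule: infinite_finite_induct) auto

lemma wcoef_snoc: "wcoef c i (w @ [a]) = wcoef c (Suc i) w * c i a"
  by (induction w) (auto simp: algebra_simps)

lemma wcoef_map_rev_upt: "wcoef c i (map F (rev [0..<L])) = (\<Prod>s<L. c (i + s) (F s))"
  by (induction L) (auto simp: algebra_simps)

lemma finite_gens: "finite (gens n)"
  by (rule finite_subset[of _ "{1..n} \<times> {1..n}"]) (auto simp: gens_def)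

lemma gens_less: "e \<in> gens n \<Longrightarrow> fst e < snd e \<and> 1 \<le> fst e \<and> snd e \<le> n"
  unfolding gens_def by auto

lemma prod_edge_sign_nonzero: "prod_list (map (\<lambda>(u, v). edge_sign u v) ps) \<noteq> (0 :: 'k::field)"
  by (induction ps) (auto simp: edge_sign_def split: if_splits)

lemma sum_omon_mult:
  assumes "finite W" "map (\<lambda>(u, v). edge u v) ps \<in> W"
  shows "(\<Sum>w\<in>W. (omon ps :: 'k::comm_ring_1 ncpoly) w * F w) =
     prod_list (map (\<lambda>(u, v). edge_sign u v) ps) * F (map (\<lambda>(u, v). edge u v) ps)"
proof -
  have "(\<Sum>w\<in>W. (omon ps :: 'k ncpoly) w * F w) = (\<Sum>w\<in>W. if w = map (\<lambda>(u, v). edge u v) ps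
      then prod_list (map (\<lambda>(u, v). edge_sign u v) ps) * F w else 0)"
    by (rule sum.cong) (auto simp: omon_apply)
  then show ?thesis using assms by (simp add: sum.delta')
qed

lemma star_cycle_relator_apply:
  "(star_cycle_relator a bs :: 'k::comm_ring_1 ncpoly) w =
     (\<Sum>t<length bs. omon (map (Pair a) (cyclic_word bs t)) w)"
  unfolding star_cycle_relator_def by (rule sum_fun_apply)

lemma star_cycle_relator_support:
  "(star_cycle_relator a bs :: 'k::comm_ring_1 ncpoly) w \<noteq> 0 \<Longrightarrow>
     \<exists>t<length bs. w = map (edge a) (cyclic_word bs t)"
  unfolding star_cycle_relator_apply by (auto simp: omon_apply comp_def intro: ccontr)

lemma sum_star_cycle_relator_mult:
  assumes "finite W" "\<And>t. t < length bs \<Longrightarrow> map (edge a) (cyclic_word bs t) \<in> W"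
  shows "(\<Sum>w\<in>W. (star_cycle_relator a bs :: 'k::comm_ring_1 ncpoly) w * F w) =
     (\<Sum>t<length bs. prod_list (map (edge_sign a) (cyclic_word bs t))
       * F (map (edge a) (cyclic_word bs t)))"
proof -
  have "(\<Sum>w\<in>W. (star_cycle_relator a bs :: 'k ncpoly) w * F w) =
      (\<Sum>t<length bs. \<Sum>w\<in>W. (omon (map (Pair a) (cyclic_word bs t)) :: 'k ncpoly) w * F w)"
    by (simp add: star_cycle_relator_apply sum_distrib_right sum.swap[of _ W])
  also have "\<dots> = (\<Sum>t<length bs. prod_list (map (edge_sign a) (cyclic_word bs t))
      * F (map (edge a) (cyclic_word bs t)))"
  proof (rule sum.cong)
    fix t assume "t \<in> {..<length bs}"
    then show "(\<Sum>w\<in>W. (omon (map (Pair a) (cyclic_word bs t)) :: 'k ncpoly) w * F w) =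
        prod_list (map (edge_sign a) (cyclic_word bs t)) * F (map (edge a) (cyclic_word bs t))"
      using sum_omon_mult[OF assms(1), of "map (Pair a) (cyclic_word bs t)" F] assms(2)
      by (simp add: comp_def)
  qed simp
  finally show ?thesis .
qed

lemma map_rev_upt: "map h (rev [0..<Suc g]) = map (\<lambda>t. h (g - t)) [0..<Suc g]"
  by (rule nth_equalityI) (auto simp: rev_nth simp del: upt_Suc)

lemma gens_other_end:
  assumes "e \<in> gens n" "a \<in> ends e"
  shows "\<exists>b. e = edge a b \<and> b \<noteq> a \<and> b \<in> {1..n}"
proof -
  obtain i j where e: "e = (i, j)" "1 \<le> i" "i < j" "j \<le> n" using assms(1) unfolding gens_def by auto
  then consider "a = i" | "a = j" using assms(2) unfolding ends_def by auto
  then show ?thesis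
  proof cases
    case 1
    then show ?thesis using e by (intro exI[of _ j]) (auto simp: edge_def)
  next
    case 2
    then show ?thesis using e by (intro exI[of _ i]) (auto simp: edge_def)
  qed
qed

context
  fixes n :: nat and E :: "gen set" and d :: nat and c :: "nat \<Rightarrow> gen \<Rightarrow> 'k::field"
  assumes E_gens: "E \<subseteq> gens n" and module: "truncated_point_module n E d c"
begin

lemma finite_edges: "finite E"
  using finite_subset[OF E_gens finite_gens] .

lemma kernel_acts_as_zero:
  "p \<in> fkG_kernel n E \<Longrightarrow> i \<le> d \<Longrightarrow> (\<Sum>w\<in>{w. set w \<subseteq> E \<and> length w = l}. p w * wcoef c i w) = 0"
  using module unfolding truncated_point_module_def by blast

lemma step_edge_exists: "j < d \<Longrightarrow> \<exists>a\<in>E. c j a \<noteq> 0"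
proof -
  assume "j < d"
  then obtain w where w: "set w \<subseteq> E" "length w = Suc j" "wcoef c 0 w \<noteq> 0"
    using module unfolding truncated_point_module_def by (metis Suc_leI)
  then obtain a w' where "w = a # w'" by (cases w) auto
  then show ?thesis using w by auto
qed

lemma acting_edges_exist: "\<exists>pick. \<forall>j<d. pick j \<in> E \<and> c j (pick j) \<noteq> 0"
proof -
  have "\<forall>j\<in>{..<d}. \<exists>a. a \<in> E \<and> c j a \<noteq> 0" using step_edge_exists by blast
  from bchoice[OF this] show ?thesis by auto
qed

lemma consecutive_edges_meet:
  assumes m: "m < d" and xy: "x \<in> E" "y \<in> E" and nonzero: "c (Suc m) x \<noteq> 0" "c m y \<noteq> 0"
    and no_repeat: "\<forall>e\<in>E. c m e = 0 \<or> c (Suc m) e = 0"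
  shows "ends x \<inter> ends y \<noteq> {}"
proof
  assume disjoint: "ends x \<inter> ends y = {}"
  define r :: "'k ncpoly" where "r = nc_sub (nc_word [x, y]) (nc_word [y, x])"
  have "r \<in> fk_relators n"
    using fk_relator_commute[of "fst x" "snd x" n "fst y" "snd y"] xy E_gens disjoint
    unfolding r_def ends_def by auto
  then have "r \<in> fkG_kernel n E"
    unfolding fkG_kernel_def r_def using xy
    by (auto intro: fk_ideal.rel simp: nc_sub_def nc_word_def split: if_splits)
  from kernel_acts_as_zero[OF this, of m 2] m
  have "(\<Sum>w\<in>{w. set w \<subseteq> E \<and> length w = 2}. (nc_word [x, y] w - nc_word [y, x] w) * wcoef c m w) = 0"
    by (simp add: r_def nc_sub_def)
  moreover have "finite {w. set w \<subseteq> E \<and> length w = 2}"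
    using finite_edges by (rule finite_lists_length_eq)
  ultimately have "wcoef c m [x, y] - wcoef c m [y, x] = 0"
    using xy by (simp add: left_diff_distrib sum_subtractf sum_nc_word_mult)
  moreover have "c (Suc m) x * c m y \<noteq> 0" using nonzero by simp
  ultimately have "c m x \<noteq> 0" "c (Suc m) x \<noteq> 0" using nonzero by auto
  then show False using no_repeat xy by auto
qed

lemma star_cycle_word_acts_as_zero:
  assumes a: "a \<in> {1..n}" "a \<notin> set bs" and bs: "set bs \<subseteq> {1..n}" "distinct bs" "bs \<noteq> []"
    and edges: "\<forall>b\<in>set bs. edge a b \<in> E" and j: "j \<le> d"
    and others: "\<And>t. 0 < t \<Longrightarrow> t < length bs \<Longrightarrow> c j (edge a (bs ! t)) = 0"
  shows "wcoef c j (map (edge a) (bs @ [hd bs])) = 0"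
proof -
  define W where "W = {w. set w \<subseteq> E \<and> length w = Suc (length bs)}"
  have W_finite: "finite W"
    unfolding W_def using finite_edges by (rule finite_lists_length_eq)
  have word_edges: "set (map (edge a) (cyclic_word bs t)) \<subseteq> E" if "t < length bs" for t
    using set_cyclic_word[OF that] edges by auto
  have W_words: "map (edge a) (cyclic_word bs t) \<in> W" if "t < length bs" for t
    using word_edges[OF that] unfolding W_def by (simp add: cyclic_word_def)
  have "(star_cycle_relator a bs :: 'k ncpoly) \<in> fkG_kernel n E"
    unfolding fkG_kernel_def
  proof (intro CollectI conjI allI impI star_cycle_relator_in_fk_ideal)
    fix w assume "(star_cycle_relator a bs :: 'k ncpoly) w \<noteq> 0"
    then obtain t where "t < length bs" "w = map (edge a) (cyclic_word bs t)"
      using star_cycle_relator_support by blast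
    then show "w \<in> lists E" using word_edges by (simp add: lists_eq_set)
  qed (use a bs in auto)
  then have "0 = (\<Sum>w\<in>W. (star_cycle_relator a bs :: 'k ncpoly) w * wcoef c j w)"
    using kernel_acts_as_zero[OF _ j] unfolding W_def by simp
  also have "\<dots> = (\<Sum>t<length bs. prod_list (map (edge_sign a) (cyclic_word bs t))
      * wcoef c j (map (edge a) (cyclic_word bs t)))"
    by (rule sum_star_cycle_relator_mult[OF W_finite W_words])
  also have "\<dots> = (\<Sum>t\<in>{0}. prod_list (map (edge_sign a) (cyclic_word bs t))
      * wcoef c j (map (edge a) (cyclic_word bs t)))"
    using bs(3) others by (intro sum.mono_neutral_right) (auto simp: cyclic_word_def wcoef_snoc)
  finally show ?thesis
    using prod_edge_sign_nonzero[of "map (Pair a) (cyclic_word bs 0)", where 'k='k]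
    by (simp add: cyclic_word_0[OF bs(3)] comp_def)
qed

lemma no_return_around_star:
  assumes g: "1 \<le> g" "j + g < d"
    and f: "\<And>s. s < g \<Longrightarrow> f s \<in> E \<and> a \<in> ends (f s) \<and> c (j + s) (f s) \<noteq> 0"
    and inj: "inj_on f {..<g}"
    and return: "c (j + g) (f 0) \<noteq> 0"
    and fresh: "\<And>s. 0 < s \<Longrightarrow> s < g \<Longrightarrow> c j (f s) = 0"
  shows False
proof -
  have other_ends: "\<forall>s\<in>{..<g}. \<exists>b. f s = edge a b \<and> b \<noteq> a \<and> b \<in> {1..n}"
    using gens_other_end f E_gens by blast
  obtain ob where ob: "\<And>s. s < g \<Longrightarrow> f s = edge a (ob s) \<and> ob s \<noteq> a \<and> ob s \<in> {1..n}"
    using bchoice[OF other_ends] by blast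
  have a: "a \<in> {1..n}"
    using f[of 0] g E_gens gens_less[of "f 0" n] unfolding ends_def by auto
  define \<tau> where "\<tau> t = (g - t) mod g" for t
  have \<tau>: "\<tau> t < g" "0 < t \<Longrightarrow> t < g \<Longrightarrow> \<tau> t = g - t" for t
    unfolding \<tau>_def using g by auto
  have \<tau>_inj: "inj_on \<tau> {..<g}"
    unfolding \<tau>_def by (rule inj_onI) (auto simp: mod_if split: if_splits)
  have ob_inj: "inj_on ob {..<g}"
    using inj ob unfolding inj_on_def by (metis lessThan_iff)
  \<comment> \<open>bs lists the far ends of f 0, f (g - 1), ..., f 1, so that the cycle word of bs,
    whose last letter acts first, runs through f 0, f 1, ..., f (g - 1), f 0 in degrees j, ..., j + g\<close>
  define bs where "bs = map (ob \<circ> \<tau>) [0..<g]"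
  have bs_nth: "t < g \<Longrightarrow> bs ! t = ob (\<tau> t)" for t
    unfolding bs_def by simp
  have "bs @ [hd bs] = map (ob \<circ> \<tau>) [0..<Suc g]"
    using g unfolding bs_def \<tau>_def by (simp add: hd_map)
  then have word: "map (edge a) (bs @ [hd bs]) = map (\<lambda>s. f (s mod g)) (rev [0..<Suc g])"
    unfolding map_rev_upt using ob \<tau>(1) unfolding \<tau>_def by auto
  have "wcoef c j (map (edge a) (bs @ [hd bs])) = 0"
  proof (rule star_cycle_word_acts_as_zero)
    show "distinct bs"
      unfolding bs_def distinct_map using comp_inj_on[OF \<tau>_inj] ob_inj \<tau>(1)
      by (auto intro: comp_inj_on inj_on_subset[OF ob_inj] simp: atLeast0LessThan)
    show "\<forall>b\<in>set bs. edge a b \<in> E" "set bs \<subseteq> {1..n}" "a \<notin> set bs"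
      unfolding bs_def using ob \<tau>(1) f by auto
    show "c j (edge a (bs ! t)) = 0" if "0 < t" "t < length bs" for t
      using that bs_nth ob \<tau> fresh unfolding bs_def by auto
  qed (use a g bs_def in auto)
  moreover have "(\<Prod>s<Suc g. c (j + s) (f (s mod g))) \<noteq> 0"
    using f return by (auto simp: less_Suc_eq)
  ultimately show False
    unfolding word wcoef_map_rev_upt by simp
qed

lemma acting_edges_meet_cyclically:
  assumes g: "1 \<le> g" "j + g < d"
    and f: "\<And>s. s < g \<Longrightarrow> f s \<in> E \<and> c (j + s) (f s) \<noteq> 0" and return: "c (j + g) (f 0) \<noteq> 0"
    and no_repeat: "\<And>m e. 1 < g \<Longrightarrow> m < j + g \<Longrightarrow> e \<in> E \<Longrightarrow> c m e = 0 \<or> c (Suc m) e = 0"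
  shows "\<forall>s<g. ends (f s) \<inter> ends (f (Suc s mod g)) \<noteq> {}"
proof (intro allI impI)
  fix s assume s: "s < g"
  consider "Suc s < g" | "g = 1" "s = 0" | "1 < g" "Suc s = g" using s g by linarith
  then show "ends (f s) \<inter> ends (f (Suc s mod g)) \<noteq> {}"
  proof cases
    case 1
    then show ?thesis
      using consecutive_edges_meet[of "j + s" "f (Suc s)" "f s"] f[of s] f[of "Suc s"] no_repeat g
      by (auto simp: Int_commute)
  next
    case 2
    then show ?thesis by (simp add: ends_def)
  next
    case 3
    then show ?thesis
      using consecutive_edges_meet[of "j + s" "f 0" "f s"] f[of s] f[of 0] no_repeat return g
      by (auto simp: Int_commute)
  qed
qed

lemma edge_acts_once:
  assumes acyclic: "acyclic_graph E"
  shows "1 \<le> g \<Longrightarrow> j + g < d \<Longrightarrow> e \<in> E \<Longrightarrow> c j e = 0 \<or> c (j + g) e = 0"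
proof (induction g arbitrary: j e rule: less_induct)
  case (less g)
  show ?case
  proof (rule ccontr)
    assume "\<not> (c j e = 0 \<or> c (j + g) e = 0)"
    then have e0: "c j e \<noteq> 0" and eg: "c (j + g) e \<noteq> 0" by auto
    have once: "c j' e' = 0 \<or> c (j' + g') e' = 0"
      if "1 \<le> g'" "g' < g" "j' + g' < d" "e' \<in> E" for g' j' e'
      using less.IH that by blast
    obtain pick where pick: "\<And>m. m < d \<Longrightarrow> pick m \<in> E \<and> c m (pick m) \<noteq> 0"
      using acting_edges_exist by blast
    define f where "f s = (if s = 0 then e else pick (j + s))" for s
    have f: "f s \<in> E \<and> c (j + s) (f s) \<noteq> 0" if "s < g" for s
      unfolding f_def using pick[of "j + s"] that e0 less.prems by auto
    have fresh: "c j (f s) = 0" if "0 < s" "s < g" for s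
      using once[of s j "f s"] f[of s] that less.prems by auto
    have inj: "inj_on f {..<g}"
    proof (rule inj_onI)
      fix s s' assume "s \<in> {..<g}" "s' \<in> {..<g}" "f s = f s'"
      then show "s = s'"
        using once[of "s' - s" "j + s" "f s"] once[of "s - s'" "j + s'" "f s'"] f[of s] f[of s']
          less.prems
        by (cases s s' rule: linorder_cases) auto
    qed
    have meet: "\<forall>s<g. ends (f s) \<inter> ends (f (Suc s mod g)) \<noteq> {}"
    proof (rule acting_edges_meet_cyclically[OF less.prems(1,2) f])
      show "c (j + g) (f 0) \<noteq> 0" using eg by (simp add: f_def)
      show "c m e' = 0 \<or> c (Suc m) e' = 0" if "1 < g" "m < j + g" "e' \<in> E" for m e'
        using once[of 1 m e'] that less.prems by auto
    qed
    obtain a where a: "\<forall>s<g. a \<in> ends (f s)"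
      using acyclic_edge_cycle_common_vertex[OF acyclic _ less.prems(1) _ inj meet] f E_gens
        gens_less
      by blast
    show False
    proof (rule no_return_around_star[OF less.prems(1,2) _ inj _ fresh])
      show "f s \<in> E \<and> a \<in> ends (f s) \<and> c (j + s) (f s) \<noteq> 0" if "s < g" for s
        using f[OF that] a that by blast
      show "c (j + g) (f 0) \<noteq> 0" using eg by (simp add: f_def)
    qed
  qed
qed

lemma degree_le_card_edges:
  assumes "acyclic_graph E"
  shows "d \<le> card E"
proof -
  obtain pick where pick: "\<And>j. j < d \<Longrightarrow> pick j \<in> E \<and> c j (pick j) \<noteq> 0"
    using acting_edges_exist by blast
  have "inj_on pick {..<d}"
  proof (rule inj_onI)
    fix j j' assume "j \<in> {..<d}" "j' \<in> {..<d}" "pick j = pick j'"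
    then show "j = j'"
      using edge_acts_once[OF assms, of "j' - j" j "pick j"]
        edge_acts_once[OF assms, of "j - j'" j' "pick j'"]
        pick[of j] pick[of j']
      by (cases j j' rule: linorder_cases) auto
  qed
  moreover have "pick ` {..<d} \<subseteq> E" using pick by auto
  ultimately show ?thesis
    using card_inj_on_le[OF _ _ finite_edges] by fastforce
qed

end

section \<open>The Bruhat representation of E_n\<close>

definition values_avoid :: "(nat \<Rightarrow> nat) \<Rightarrow> nat set \<Rightarrow> nat \<Rightarrow> nat \<Rightarrow> bool" where
  "values_avoid w I a b \<longleftrightarrow> (\<forall>m\<in>I. \<not> (a < w m \<and> w m < b))"

text \<open>For i < j this says that w t_ij covers w in the Bruhat order, i.e. has exactly one more
  inversion.\<close>
definition bruhat_cover :: "nat \<Rightarrow> nat \<Rightarrow> (nat \<Rightarrow> nat) \<Rightarrow> bool" where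
  "bruhat_cover i j w \<longleftrightarrow> w i < w j \<and> values_avoid w {i<..<j} (w i) (w j)"

definition swap_pos :: "nat \<Rightarrow> nat \<Rightarrow> (nat \<Rightarrow> nat) \<Rightarrow> (nat \<Rightarrow> nat)" where
  "swap_pos i j w = w(i := w j, j := w i)"

lemma swap_pos_apply: "swap_pos i j w m = (if m = i then w j else if m = j then w i else w m)"
  unfolding swap_pos_def by auto

lemma values_avoid_cong:
  "(\<And>m. m \<in> I \<Longrightarrow> v m = w m) \<Longrightarrow> values_avoid v I a b \<longleftrightarrow> values_avoid w I a b"
  unfolding values_avoid_def by auto

lemma values_avoid_swap_outside:
  "p \<notin> I \<Longrightarrow> q \<notin> I \<Longrightarrow> values_avoid (swap_pos p q w) I a b \<longleftrightarrow> values_avoid w I a b"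
  by (rule values_avoid_cong) (auto simp: swap_pos_apply)

lemma bruhat_cover_split:
  assumes "i < j" "j < k"
  shows "bruhat_cover i k w \<longleftrightarrow> w i < w k \<and> values_avoid w {i<..<j} (w i) (w k)
    \<and> \<not> (w i < w j \<and> w j < w k) \<and> values_avoid w {j<..<k} (w i) (w k)"
proof -
  have "{i<..<k} = {i<..<j} \<union> {j} \<union> {j<..<k}" using assms by auto
  then show ?thesis unfolding bruhat_cover_def values_avoid_def by auto
qed

lemma bruhat_cover_cong:
  assumes "i < j" "\<And>m. i \<le> m \<Longrightarrow> m \<le> j \<Longrightarrow> v m = w m"
  shows "bruhat_cover i j v \<longleftrightarrow> bruhat_cover i j w"
  unfolding bruhat_cover_def using assms values_avoid_cong[of "{i<..<j}" v w] by auto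

lemma bruhat_cover_swap_outside:
  assumes "i < j" "p \<notin> {i..j}" "q \<notin> {i..j}"
  shows "bruhat_cover i j (swap_pos p q w) \<longleftrightarrow> bruhat_cover i j w"
  using assms by (intro bruhat_cover_cong) (auto simp: swap_pos_apply)

lemma values_avoid_swap_inside:
  assumes "k \<in> I" "l \<in> I"
  shows "values_avoid (swap_pos k l w) I a b \<longleftrightarrow> values_avoid w I a b"
  unfolding values_avoid_def
proof
  assume "\<forall>m\<in>I. \<not> (a < swap_pos k l w m \<and> swap_pos k l w m < b)"
  then show "\<forall>m\<in>I. \<not> (a < w m \<and> w m < b)"
    using assms by (metis swap_pos_apply)
next
  assume "\<forall>m\<in>I. \<not> (a < w m \<and> w m < b)"
  then show "\<forall>m\<in>I. \<not> (a < swap_pos k l w m \<and> swap_pos k l w m < b)"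
    using assms by (simp add: swap_pos_apply)
qed

lemma bruhat_cover_swap_nested:
  assumes "i < k" "k < l" "l < j"
  shows "bruhat_cover i j (swap_pos k l w) \<longleftrightarrow> bruhat_cover i j w"
proof -
  have "swap_pos k l w i = w i" "swap_pos k l w j = w j"
    using assms by (auto simp: swap_pos_apply)
  then show ?thesis
    unfolding bruhat_cover_def using assms by (simp add: values_avoid_swap_inside)
qed

lemma crossing_order_cond:
  fixes p q r s :: nat
  assumes "p \<noteq> r" "p \<noteq> s" "q \<noteq> r" "q \<noteq> s" "p < q" "r < s"
  shows "(\<not> (r < q \<and> q < s) \<and> \<not> (p < s \<and> s < q)) \<longleftrightarrow> (\<not> (p < r \<and> r < q) \<and> \<not> (r < p \<and> p < s))"
  using assms by auto

lemma bruhat_cover_swap_crossing: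
  assumes ikjl: "i < k" "k < j" "j < l" and inj: "inj_on w {i..l}"
  shows "(bruhat_cover k l w \<and> bruhat_cover i j (swap_pos k l w)) \<longleftrightarrow>
    (bruhat_cover i j w \<and> bruhat_cover k l (swap_pos i j w))"
proof -
  let ?A = "{i<..<k}" and ?B = "{k<..<j}" and ?C = "{j<..<l}"
  have d: "w i \<noteq> w k" "w i \<noteq> w l" "w j \<noteq> w k" "w j \<noteq> w l"
    using inj ikjl unfolding inj_on_def by force+
  have "bruhat_cover k l w \<longleftrightarrow> w k < w l \<and> values_avoid w ?B (w k) (w l)
      \<and> \<not> (w k < w j \<and> w j < w l) \<and> values_avoid w ?C (w k) (w l)"
    using ikjl(2,3) by (rule bruhat_cover_split)
  moreover have "bruhat_cover i j w \<longleftrightarrow> w i < w j \<and> values_avoid w ?A (w i) (w j)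
      \<and> \<not> (w i < w k \<and> w k < w j) \<and> values_avoid w ?B (w i) (w j)"
    using ikjl(1,2) by (rule bruhat_cover_split)
  moreover have "bruhat_cover i j (swap_pos k l w) \<longleftrightarrow> w i < w j \<and> values_avoid w ?A (w i) (w j)
      \<and> \<not> (w i < w l \<and> w l < w j) \<and> values_avoid w ?B (w i) (w j)"
    unfolding bruhat_cover_split[OF ikjl(1,2)] using ikjl
    by (simp add: values_avoid_swap_outside swap_pos_apply)
  moreover have "bruhat_cover k l (swap_pos i j w) \<longleftrightarrow> w k < w l \<and> values_avoid w ?B (w k) (w l)
      \<and> \<not> (w k < w i \<and> w i < w l) \<and> values_avoid w ?C (w k) (w l)"
    unfolding bruhat_cover_split[OF ikjl(2,3)] using ikjl
    by (simp add: values_avoid_swap_outside swap_pos_apply)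
  ultimately show ?thesis using crossing_order_cond[OF d] by blast
qed

lemma triangle_left_order_cond:
  fixes a b c :: nat
  assumes "a \<noteq> b" "\<forall>m\<in>I. w m \<noteq> b" "\<forall>m\<in>J. w m \<noteq> a"
  shows "(b < c \<and> values_avoid w J b c) \<and> (a < c \<and> values_avoid w I a c) \<longleftrightarrow>
    ((a < c \<and> values_avoid w I a c \<and> \<not> (a < b \<and> b < c) \<and> values_avoid w J a c)
      \<and> (b < a \<and> values_avoid w J b a))
    \<or> ((a < b \<and> values_avoid w I a b)
      \<and> (b < c \<and> values_avoid w I b c \<and> \<not> (b < a \<and> a < c) \<and> values_avoid w J b c))"
  using assms unfolding values_avoid_def
  by (cases "a < b") (auto; (metis not_less_iff_gr_or_eq)?)+

lemma triangle_right_order_cond: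
  fixes a b c :: nat
  assumes "b \<noteq> c" "\<forall>m\<in>I. w m \<noteq> c" "\<forall>m\<in>J. w m \<noteq> b"
  shows "(a < b \<and> values_avoid w I a b) \<and> (a < c \<and> values_avoid w J a c) \<longleftrightarrow>
    ((b < c \<and> values_avoid w J b c)
      \<and> (a < b \<and> values_avoid w I a b \<and> \<not> (a < c \<and> c < b) \<and> values_avoid w J a b))
    \<or> ((a < c \<and> values_avoid w I a c \<and> \<not> (a < b \<and> b < c) \<and> values_avoid w J a c)
      \<and> (c < b \<and> values_avoid w I c b))"
  using assms unfolding values_avoid_def
  by (cases "b < c") (auto; (metis not_less_iff_gr_or_eq)?)+

text \<open>Applied to w, the first term of x_ij x_jk - x_jk x_ik - x_ik x_ij is nonzero iff exactly one
  of the other two is; the nonzero terms are all w composed with the same 3-cycle.\<close>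
lemma bruhat_triangle_left:
  assumes ijk: "i < j" "j < k" and inj: "inj_on w {i..k}"
  shows "(bruhat_cover j k w \<and> bruhat_cover i j (swap_pos j k w)) \<longleftrightarrow>
      (bruhat_cover i k w \<and> bruhat_cover j k (swap_pos i k w))
      \<or> (bruhat_cover i j w \<and> bruhat_cover i k (swap_pos i j w))"
    and "\<not> ((bruhat_cover i k w \<and> bruhat_cover j k (swap_pos i k w))
      \<and> (bruhat_cover i j w \<and> bruhat_cover i k (swap_pos i j w)))"
proof -
  let ?I = "{i<..<j}" and ?J = "{j<..<k}"
  have distinct: "w i \<noteq> w j" "\<forall>m\<in>?I. w m \<noteq> w j" "\<forall>m\<in>?J. w m \<noteq> w i"
    using inj ijk unfolding inj_on_def by force+
  have covers:
    "bruhat_cover j k w \<longleftrightarrow> w j < w k \<and> values_avoid w ?J (w j) (w k)"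
    "bruhat_cover i j (swap_pos j k w) \<longleftrightarrow> w i < w k \<and> values_avoid w ?I (w i) (w k)"
    "bruhat_cover i k w \<longleftrightarrow> w i < w k \<and> values_avoid w ?I (w i) (w k)
      \<and> \<not> (w i < w j \<and> w j < w k) \<and> values_avoid w ?J (w i) (w k)"
    "bruhat_cover j k (swap_pos i k w) \<longleftrightarrow> w j < w i \<and> values_avoid w ?J (w j) (w i)"
    "bruhat_cover i j w \<longleftrightarrow> w i < w j \<and> values_avoid w ?I (w i) (w j)"
    "bruhat_cover i k (swap_pos i j w) \<longleftrightarrow> w j < w k \<and> values_avoid w ?I (w j) (w k)
      \<and> \<not> (w j < w i \<and> w i < w k) \<and> values_avoid w ?J (w j) (w k)"
    using ijk unfolding bruhat_cover_split[OF ijk]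
    by (auto simp: bruhat_cover_def swap_pos_apply values_avoid_swap_outside)
  show "(bruhat_cover j k w \<and> bruhat_cover i j (swap_pos j k w)) \<longleftrightarrow>
      (bruhat_cover i k w \<and> bruhat_cover j k (swap_pos i k w))
      \<or> (bruhat_cover i j w \<and> bruhat_cover i k (swap_pos i j w))"
    unfolding covers by (rule triangle_left_order_cond[OF distinct])
  show "\<not> ((bruhat_cover i k w \<and> bruhat_cover j k (swap_pos i k w))
      \<and> (bruhat_cover i j w \<and> bruhat_cover i k (swap_pos i j w)))"
    unfolding covers by auto
qed

lemma bruhat_triangle_right:
  assumes ijk: "i < j" "j < k" and inj: "inj_on w {i..k}"
  shows "(bruhat_cover i j w \<and> bruhat_cover j k (swap_pos i j w)) \<longleftrightarrow>
      (bruhat_cover j k w \<and> bruhat_cover i k (swap_pos j k w))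
      \<or> (bruhat_cover i k w \<and> bruhat_cover i j (swap_pos i k w))"
    and "\<not> ((bruhat_cover j k w \<and> bruhat_cover i k (swap_pos j k w))
      \<and> (bruhat_cover i k w \<and> bruhat_cover i j (swap_pos i k w)))"
proof -
  let ?I = "{i<..<j}" and ?J = "{j<..<k}"
  have distinct: "w j \<noteq> w k" "\<forall>m\<in>?I. w m \<noteq> w k" "\<forall>m\<in>?J. w m \<noteq> w j"
    using inj ijk unfolding inj_on_def by force+
  have covers:
    "bruhat_cover i j w \<longleftrightarrow> w i < w j \<and> values_avoid w ?I (w i) (w j)"
    "bruhat_cover j k (swap_pos i j w) \<longleftrightarrow> w i < w k \<and> values_avoid w ?J (w i) (w k)"
    "bruhat_cover j k w \<longleftrightarrow> w j < w k \<and> values_avoid w ?J (w j) (w k)"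
    "bruhat_cover i k (swap_pos j k w) \<longleftrightarrow> w i < w j \<and> values_avoid w ?I (w i) (w j)
      \<and> \<not> (w i < w k \<and> w k < w j) \<and> values_avoid w ?J (w i) (w j)"
    "bruhat_cover i k w \<longleftrightarrow> w i < w k \<and> values_avoid w ?I (w i) (w k)
      \<and> \<not> (w i < w j \<and> w j < w k) \<and> values_avoid w ?J (w i) (w k)"
    "bruhat_cover i j (swap_pos i k w) \<longleftrightarrow> w k < w j \<and> values_avoid w ?I (w k) (w j)"
    using ijk unfolding bruhat_cover_split[OF ijk]
    by (auto simp: bruhat_cover_def swap_pos_apply values_avoid_swap_outside)
  show "(bruhat_cover i j w \<and> bruhat_cover j k (swap_pos i j w)) \<longleftrightarrow>
      (bruhat_cover j k w \<and> bruhat_cover i k (swap_pos j k w))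
      \<or> (bruhat_cover i k w \<and> bruhat_cover i j (swap_pos i k w))"
    unfolding covers by (rule triangle_right_order_cond[OF distinct])
  show "\<not> ((bruhat_cover j k w \<and> bruhat_cover i k (swap_pos j k w))
      \<and> (bruhat_cover i k w \<and> bruhat_cover i j (swap_pos i k w)))"
    unfolding covers by auto
qed

definition bruhat_gen :: "gen \<Rightarrow> (nat \<Rightarrow> nat) \<Rightarrow> (nat \<Rightarrow> nat) option" where
  "bruhat_gen e w = (if fst e < snd e \<and> bruhat_cover (fst e) (snd e) w
    then Some (swap_pos (fst e) (snd e) w) else None)"

fun bruhat_word :: "gen list \<Rightarrow> (nat \<Rightarrow> nat) \<Rightarrow> (nat \<Rightarrow> nat) option" where
  "bruhat_word [] w = Some w"
| "bruhat_word (a # u) w = (case bruhat_word u w of None \<Rightarrow> None | Some v \<Rightarrow> bruhat_gen a v)"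

lemma bruhat_word_append:
  "bruhat_word (u @ v) w = (case bruhat_word v w of None \<Rightarrow> None | Some x \<Rightarrow> bruhat_word u x)"
  by (induction u) (auto split: option.splits)

lemma bruhat_word_pair:
  "bruhat_word [(i, j), (k, l)] w =
    (if k < l \<and> bruhat_cover k l w \<and> i < j \<and> bruhat_cover i j (swap_pos k l w)
     then Some (swap_pos i j (swap_pos k l w)) else None)"
  by (auto simp: bruhat_gen_def)

lemma inj_on_swap_pos:
  "inj_on w {1..n} \<Longrightarrow> i \<in> {1..n} \<Longrightarrow> j \<in> {1..n} \<Longrightarrow> inj_on (swap_pos i j w) {1..n}"
  unfolding inj_on_def swap_pos_apply by metis

lemma inj_on_bruhat_word:
  "set u \<subseteq> gens n \<Longrightarrow> inj_on w {1..n} \<Longrightarrow> bruhat_word u w = Some v \<Longrightarrow> inj_on v {1..n}"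
proof (induction u arbitrary: v)
  case (Cons a u)
  then obtain x where x: "bruhat_word u w = Some x" "bruhat_gen a x = Some v"
    by (auto split: option.splits)
  have "a \<in> gens n" using Cons.prems by auto
  then have "fst a \<in> {1..n}" "snd a \<in> {1..n}" unfolding gens_def by auto
  moreover have "v = swap_pos (fst a) (snd a) x"
    using x(2) by (auto simp: bruhat_gen_def split: if_splits)
  moreover have "inj_on x {1..n}" using Cons x by auto
  ultimately show ?case using inj_on_swap_pos by blast
qed simp

lemma bruhat_word_square: "bruhat_word [e, e] w = None"
  by (cases e) (auto simp: bruhat_gen_def bruhat_cover_def swap_pos_apply)

lemma bruhat_covers_commute_lt:
  assumes ij: "i < j" and kl: "k < l" and ik: "i < k" and disjoint: "{i, j} \<inter> {k, l} = {}"
    and inj: "inj_on w {1..n}" and range: "1 \<le> i" "l \<le> n"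
  shows "(bruhat_cover k l w \<and> bruhat_cover i j (swap_pos k l w)) \<longleftrightarrow>
    (bruhat_cover i j w \<and> bruhat_cover k l (swap_pos i j w))"
proof -
  consider "j < k" | "l < j" | "k < j" "j < l"
    using disjoint ik kl
    by (metis insert_disjoint(2) insert_iff linorder_neqE_nat order.strict_trans)
  then show ?thesis
  proof cases
    case 1
    then show ?thesis using ij kl by (auto simp: bruhat_cover_swap_outside)
  next
    case 2
    then show ?thesis using ik kl by (auto simp: bruhat_cover_swap_nested bruhat_cover_swap_outside)
  next
    case 3
    have "inj_on w {i..l}" using inj by (rule inj_on_subset) (use range in auto)
    then show ?thesis using bruhat_cover_swap_crossing[of i k j l w] ik 3 by blast
  qed
qed

lemma bruhat_word_commute:
  assumes "(i, j) \<in> gens n" "(k, l) \<in> gens n" and disjoint: "{i, j} \<inter> {k, l} = {}"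
    and inj: "inj_on w {1..n}"
  shows "bruhat_word [(i, j), (k, l)] w = bruhat_word [(k, l), (i, j)] w"
proof -
  have ij: "i < j" "1 \<le> i" "j \<le> n" and kl: "k < l" "1 \<le> k" "l \<le> n"
    using assms(1,2) unfolding gens_def by auto
  have "i \<noteq> k" using disjoint by auto
  then have "(bruhat_cover k l w \<and> bruhat_cover i j (swap_pos k l w)) \<longleftrightarrow>
      (bruhat_cover i j w \<and> bruhat_cover k l (swap_pos i j w))"
    using bruhat_covers_commute_lt[of i j k l w n] bruhat_covers_commute_lt[of k l i j w n]
      ij kl disjoint inj by (cases "i < k") auto
  moreover have "swap_pos i j (swap_pos k l w) = swap_pos k l (swap_pos i j w)"
    using disjoint by (auto simp: swap_pos_def fun_eq_iff)
  ultimately show ?thesis unfolding bruhat_word_pair using ij kl by auto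
qed

lemma bruhat_word_triangle_left:
  assumes ijk: "1 \<le> i" "i < j" "j < k" "k \<le> n" and inj: "inj_on w {1..n}" and G0: "G None = 0"
  shows "G (bruhat_word [(i, j), (j, k)] w) - G (bruhat_word [(j, k), (i, k)] w)
    - G (bruhat_word [(i, k), (i, j)] w) = (0 :: 'k::comm_ring_1)"
proof -
  have "inj_on w {i..k}" using inj by (rule inj_on_subset) (use ijk in auto)
  note covers = bruhat_triangle_left[OF ijk(2,3) this]
  have "swap_pos j k (swap_pos i k w) = swap_pos i j (swap_pos j k w)"
    "swap_pos i k (swap_pos i j w) = swap_pos i j (swap_pos j k w)"
    using ijk by (auto simp: swap_pos_def fun_eq_iff)
  then show ?thesis unfolding bruhat_word_pair using covers ijk G0 by (auto split: if_splits)
qed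

lemma bruhat_word_triangle_right:
  assumes ijk: "1 \<le> i" "i < j" "j < k" "k \<le> n" and inj: "inj_on w {1..n}" and G0: "G None = 0"
  shows "G (bruhat_word [(j, k), (i, j)] w) - G (bruhat_word [(i, k), (j, k)] w)
    - G (bruhat_word [(i, j), (i, k)] w) = (0 :: 'k::comm_ring_1)"
proof -
  have "inj_on w {i..k}" using inj by (rule inj_on_subset) (use ijk in auto)
  note covers = bruhat_triangle_right[OF ijk(2,3) this]
  have "swap_pos i k (swap_pos j k w) = swap_pos j k (swap_pos i j w)"
    "swap_pos i j (swap_pos i k w) = swap_pos j k (swap_pos i j w)"
    using ijk by (auto simp: swap_pos_def fun_eq_iff)
  then show ?thesis unfolding bruhat_word_pair using covers ijk G0 by (auto split: if_splits)
qed

definition gen_words :: "nat \<Rightarrow> nat \<Rightarrow> gen list set" where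
  "gen_words n l = {x. set x \<subseteq> gens n \<and> length x = l}"

lemma finite_gen_words: "finite (gen_words n l)"
  unfolding gen_words_def using finite_gens by (rule finite_lists_length_eq)

lemma Cons_Cons_in_gen_words:
  "a \<in> gens n \<Longrightarrow> b \<in> gens n \<Longrightarrow> [a, b] \<in> gen_words n l \<longleftrightarrow> l = 2"
  unfolding gen_words_def by auto

lemma fk_relator_annihilates_bruhat:
  assumes r: "r \<in> fk_relators n" and inj: "inj_on w {1..n}" and G0: "G None = 0"
  shows "(\<Sum>x\<in>gen_words n l. (r x :: 'k::comm_ring_1) * G (bruhat_word x w)) = 0"
proof -
  let ?F = "\<lambda>x. G (bruhat_word x w)"
  have word:
    "(\<Sum>x\<in>gen_words n l. (nc_word u x :: 'k) * ?F x) = (if u \<in> gen_words n l then ?F u else 0)"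
    for u by (rule sum_nc_word_mult[OF finite_gen_words])
  have diff: "(\<Sum>x\<in>gen_words n l. nc_sub p q x * ?F x)
      = (\<Sum>x\<in>gen_words n l. p x * ?F x) - (\<Sum>x\<in>gen_words n l. (q x :: 'k) * ?F x)" for p q
    by (simp add: nc_sub_def left_diff_distrib sum_subtractf)
  from r show ?thesis
  proof (cases rule: fk_relatorsE)
    case (square i j)
    then show ?thesis using word bruhat_word_square[of "(i, j)" w] G0 by simp
  next
    case (commute i j k m)
    then have "bruhat_word [(i, j), (k, m)] w = bruhat_word [(k, m), (i, j)] w"
      using bruhat_word_commute[OF commute(2-4) inj] by blast
    then show ?thesis
      unfolding commute(1) diff word using Cons_Cons_in_gen_words commute(2,3) by simp
  next
    case (triangle_left i j k)
    then have "(i, j) \<in> gens n" "(j, k) \<in> gens n" "(i, k) \<in> gens n" unfolding gens_def by auto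
    then show ?thesis
      unfolding triangle_left(1) diff word
      using Cons_Cons_in_gen_words
        bruhat_word_triangle_left[of i j k n w G, OF triangle_left(2-5) inj G0]
      by (cases "l = 2") simp_all
  next
    case (triangle_right i j k)
    then have "(i, j) \<in> gens n" "(j, k) \<in> gens n" "(i, k) \<in> gens n" unfolding gens_def by auto
    then show ?thesis
      unfolding triangle_right(1) diff word
      using Cons_Cons_in_gen_words
        bruhat_word_triangle_right[of i j k n w G, OF triangle_right(2-5) inj G0]
      by (cases "l = 2") simp_all
  qed
qed

lemma sum_gen_words_prefix:
  assumes u: "set u \<subseteq> gens n"
  shows "(\<Sum>x\<in>gen_words n l. if take (length u) x = u then H (drop (length u) x) else 0)
    = (if length u \<le> l then (\<Sum>y\<in>gen_words n (l - length u). H y) else (0::'k::comm_ring_1))"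
proof -
  have "(\<Sum>x\<in>gen_words n l. if take (length u) x = u then H (drop (length u) x) else 0)
      = (\<Sum>x\<in>{x\<in>gen_words n l. take (length u) x = u}. H (drop (length u) x))"
    by (rule sum.inter_filter[OF finite_gen_words, symmetric])
  also have "\<dots> = (if length u \<le> l then (\<Sum>y\<in>gen_words n (l - length u). H y) else 0)"
  proof (cases "length u \<le> l")
    case True
    have img: "{x\<in>gen_words n l. take (length u) x = u} = (\<lambda>y. u @ y) ` gen_words n (l - length u)"
    proof (intro set_eqI iffI)
      fix x assume "x \<in> {x\<in>gen_words n l. take (length u) x = u}"
      then have x: "set x \<subseteq> gens n" "length x = l" "take (length u) x = u"
        unfolding gen_words_def by auto
      then have "x = u @ drop (length u) x" by (metis append_take_drop_id)
      moreover have "drop (length u) x \<in> gen_words n (l - length u)" using x unfolding gen_words_def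
        by (auto dest: in_set_dropD)
      ultimately show "x \<in> (\<lambda>y. u @ y) ` gen_words n (l - length u)" by blast
    next
      fix x assume "x \<in> (\<lambda>y. u @ y) ` gen_words n (l - length u)"
      then obtain y where "x = u @ y" "y \<in> gen_words n (l - length u)" by blast
      then show "x \<in> {x\<in>gen_words n l. take (length u) x = u}"
        using u True unfolding gen_words_def by auto
    qed
    have inj: "inj_on (\<lambda>y. u @ y) (gen_words n (l - length u))" by (rule inj_onI) simp
    show ?thesis using True unfolding img by (simp add: sum.reindex[OF inj])
  next
    case False
    have "False" if "length x = l" "take (length u) x = u" for x
    proof -
      have "length (take (length u) x) = min (length u) l" using that(1) by simp
      then have "length u = min (length u) l" using that(2) by simp
      then show False using False by simp
    qed
    then have emp: "{x\<in>gen_words n l. take (length u) x = u} = {}" unfolding gen_words_def by auto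
    show ?thesis unfolding emp using False by simp
  qed
  finally show ?thesis .
qed

lemma sum_gen_words_suffix:
  assumes v: "set v \<subseteq> gens n"
  shows "(\<Sum>x\<in>gen_words n l. if length v \<le> length x \<and> drop (length x - length v) x = v
      then H (take (length x - length v) x) else 0)
    = (if length v \<le> l then (\<Sum>y\<in>gen_words n (l - length v). H y) else (0::'k::comm_ring_1))"
proof -
  let ?P = "\<lambda>x. length v \<le> length x \<and> drop (length x - length v) x = v"
  have "(\<Sum>x\<in>gen_words n l. if ?P x then H (take (length x - length v) x) else 0)
      = (\<Sum>x\<in>{x\<in>gen_words n l. ?P x}. H (take (length x - length v) x))"
    by (rule sum.inter_filter[OF finite_gen_words, symmetric])
  also have "\<dots> = (if length v \<le> l then (\<Sum>y\<in>gen_words n (l - length v). H y) else 0)"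
  proof (cases "length v \<le> l")
    case True
    have img: "{x\<in>gen_words n l. ?P x} = (\<lambda>y. y @ v) ` gen_words n (l - length v)"
    proof (intro set_eqI iffI)
      fix x assume "x \<in> {x\<in>gen_words n l. ?P x}"
      then have x: "set x \<subseteq> gens n" "length x = l" "?P x" unfolding gen_words_def by auto
      then have "x = take (length x - length v) x @ v" by (metis append_take_drop_id)
      moreover have "take (length x - length v) x \<in> gen_words n (l - length v)"
        using x unfolding gen_words_def by (auto dest: in_set_takeD)
      ultimately show "x \<in> (\<lambda>y. y @ v) ` gen_words n (l - length v)" by blast
    next
      fix x assume "x \<in> (\<lambda>y. y @ v) ` gen_words n (l - length v)"
      then obtain y where "x = y @ v" "y \<in> gen_words n (l - length v)" by blast
      then show "x \<in> {x\<in>gen_words n l. ?P x}" using v True unfolding gen_words_def by auto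
    qed
    have inj: "inj_on (\<lambda>y. y @ v) (gen_words n (l - length v))" by (rule inj_onI) simp
    show ?thesis using True unfolding img by (simp add: sum.reindex[OF inj])
  next
    case False
    then have emp: "{x\<in>gen_words n l. ?P x} = {}" unfolding gen_words_def by auto
    show ?thesis unfolding emp using False by simp
  qed
  finally show ?thesis .
qed

text \<open>E_n acts on the span of the permutations of {1..n} by letting x_ij send w to w t_ij when
  this is a Bruhat cover and to 0 otherwise (None stands for 0, and the last letter of a word acts
  first). An element p acts as zero iff every functional G on this span kills all p w.\<close>
definition annihilates_bruhat :: "nat \<Rightarrow> 'k::comm_ring_1 ncpoly \<Rightarrow> bool" where
  "annihilates_bruhat n p \<longleftrightarrow> (\<forall>l w G. inj_on w {1..n} \<longrightarrow> G None = 0 \<longrightarrow>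
     (\<Sum>x\<in>gen_words n l. p x * G (bruhat_word x w)) = 0)"

lemma annihilates_bruhat_mult_word_left:
  assumes p: "annihilates_bruhat n (p :: 'k::comm_ring_1 ncpoly)" and u: "set u \<subseteq> gens n"
  shows "annihilates_bruhat n (nc_mult (nc_word u) p)"
  unfolding annihilates_bruhat_def
proof (intro allI impI)
  fix l and w :: "nat \<Rightarrow> nat" and G :: "(nat \<Rightarrow> nat) option \<Rightarrow> 'k"
  assume inj: "inj_on w {1..n}" and G0: "G None = 0"
  define G' where "G' ov = (case ov of None \<Rightarrow> 0 | Some y \<Rightarrow> G (bruhat_word u y))" for ov
  have G': "G' None = 0" "G (bruhat_word (u @ y) w) = G' (bruhat_word y w)" for y
    unfolding G'_def bruhat_word_append using G0 by (auto split: option.splits)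
  have "(\<Sum>x\<in>gen_words n l. nc_mult (nc_word u) p x * G (bruhat_word x w))
     = (\<Sum>x\<in>gen_words n l. if take (length u) x = u
          then p (drop (length u) x) * G (bruhat_word (u @ drop (length u) x) w) else 0)"
    unfolding nc_mult_word_left by (rule sum.cong) (auto, metis append_take_drop_id)
  also have "\<dots>
    = (if length u \<le> l then (\<Sum>y\<in>gen_words n (l - length u). p y * G (bruhat_word (u @ y) w))
      else 0)"
    by (rule sum_gen_words_prefix[OF u])
  also have "\<dots> = 0"
    using p inj G' unfolding annihilates_bruhat_def by simp
  finally show "(\<Sum>x\<in>gen_words n l. nc_mult (nc_word u) p x * G (bruhat_word x w)) = 0" .
qed

lemma annihilates_bruhat_mult_word_right:
  assumes p: "annihilates_bruhat n (p :: 'k::comm_ring_1 ncpoly)" and u: "set u \<subseteq> gens n"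
  shows "annihilates_bruhat n (nc_mult p (nc_word u))"
  unfolding annihilates_bruhat_def
proof (intro allI impI)
  fix l and w :: "nat \<Rightarrow> nat" and G :: "(nat \<Rightarrow> nat) option \<Rightarrow> 'k"
  assume inj: "inj_on w {1..n}" and G0: "G None = 0"
  have "(\<Sum>x\<in>gen_words n l. nc_mult p (nc_word u) x * G (bruhat_word x w))
     = (\<Sum>x\<in>gen_words n l. if length u \<le> length x \<and> drop (length x - length u) x = u
          then p (take (length x - length u) x)
            * G (bruhat_word (take (length x - length u) x @ u) w)
          else 0)"
    unfolding nc_mult_word_right by (rule sum.cong) (auto, metis append_take_drop_id)
  also have "\<dots>
    = (if length u \<le> l then (\<Sum>y\<in>gen_words n (l - length u). p y * G (bruhat_word (y @ u) w))
      else 0)"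
    by (rule sum_gen_words_suffix[OF u])
  also have "\<dots> = 0"
  proof (cases "bruhat_word u w")
    case None
    then show ?thesis using G0 by (simp add: bruhat_word_append)
  next
    case (Some v)
    then have "inj_on v {1..n}" using inj_on_bruhat_word[OF u inj] by blast
    then show ?thesis
      using p G0 Some unfolding annihilates_bruhat_def by (simp add: bruhat_word_append)
  qed
  finally show "(\<Sum>x\<in>gen_words n l. nc_mult p (nc_word u) x * G (bruhat_word x w)) = 0" .
qed

lemma fk_ideal_annihilates_bruhat:
  "p \<in> fk_ideal n \<Longrightarrow> annihilates_bruhat n (p :: 'k::comm_ring_1 ncpoly)"
proof (induction rule: fk_ideal.induct)
  case zero
  then show ?case by (simp add: annihilates_bruhat_def)
next
  case (rel r)
  then show ?case using fk_relator_annihilates_bruhat unfolding annihilates_bruhat_def by blast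
next
  case (add p q)
  then show ?case by (simp add: annihilates_bruhat_def nc_add_def distrib_right sum.distrib)
next
  case (smult p c)
  then show ?case
    by (simp add: annihilates_bruhat_def nc_smult_def mult.assoc sum_distrib_left[symmetric])
next
  case (lmult p u)
  then show ?case using annihilates_bruhat_mult_word_left by (auto simp: lists_eq_set)
next
  case (rmult p u)
  then show ?case using annihilates_bruhat_mult_word_right by (auto simp: lists_eq_set)
qed

section \<open>The point module of a path\<close>

text \<open>On {1..n}, v lists its values in decreasing order except that the least one sits at
  position q. Such a v is the state of the path module in degree q - 1: among the path generators
  only x_(q, q+1) acts on it, moving the least value one step to the right.\<close>
definition min_then_decreasing :: "nat \<Rightarrow> nat \<Rightarrow> (nat \<Rightarrow> nat) \<Rightarrow> bool" where
  "min_then_decreasing n q v \<longleftrightarrow> (\<forall>x\<in>{1..n}. x \<noteq> q \<longrightarrow> v q < v x) \<and>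
     (\<forall>x\<in>{1..n}. \<forall>y\<in>{1..n}. x \<noteq> q \<longrightarrow> y \<noteq> q \<longrightarrow> x < y \<longrightarrow> v y < v x)"

lemma min_then_decreasing_ascent_iff:
  assumes "min_then_decreasing n q v" "q \<in> {1..n}" "1 \<le> p" "p < n"
  shows "v p < v (Suc p) \<longleftrightarrow> p = q"
proof
  assume ascent: "v p < v (Suc p)"
  show "p = q"
  proof (rule ccontr)
    assume "p \<noteq> q"
    then have "v (Suc p) < v p"
      using assms unfolding min_then_decreasing_def by (cases "Suc p = q") auto
    with ascent show False by simp
  qed
qed (use assms in \<open>auto simp: min_then_decreasing_def\<close>)

lemma min_then_decreasing_swap:
  assumes "min_then_decreasing n q v" "1 \<le> q" "q < n"
  shows "min_then_decreasing n (Suc q) (swap_pos q (Suc q) v)"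
  using assms unfolding min_then_decreasing_def by (auto simp: swap_pos_apply)

lemma bruhat_gen_path_edge:
  assumes "min_then_decreasing n q v" "q \<in> {1..n}" "1 \<le> p" "p < n"
  shows "bruhat_gen (p, Suc p) v = (if p = q then Some (swap_pos q (Suc q) v) else None)"
proof -
  have "bruhat_cover p (Suc p) v \<longleftrightarrow> v p < v (Suc p)"
    unfolding bruhat_cover_def values_avoid_def by auto
  then show ?thesis
    unfolding bruhat_gen_def using min_then_decreasing_ascent_iff[OF assms] by auto
qed

definition path_coeff :: "nat \<Rightarrow> nat \<Rightarrow> gen \<Rightarrow> 'k::field" where
  "path_coeff m j a = (if j < m \<and> a = (Suc j, Suc (Suc j)) then 1 else 0)"

lemma mem_path_edges: "a \<in> path_edges n \<longleftrightarrow> (\<exists>p. 1 \<le> p \<and> p < n \<and> a = (p, Suc p))"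
  unfolding path_edges_def by auto

lemma wcoef_path_coeff_bruhat:
  assumes w: "set w \<subseteq> path_edges (Suc m)" and inv: "min_then_decreasing (Suc m) (Suc i) \<sigma>"
    and i: "i \<le> m"
  shows "(case bruhat_word w \<sigma> of None \<Rightarrow> wcoef (path_coeff m) i w = (0::'k::field)
          | Some v \<Rightarrow> wcoef (path_coeff m) i w = (1::'k)
            \<and> min_then_decreasing (Suc m) (Suc (i + length w)) v \<and> i + length w \<le> m)"
  using w
proof (induction w)
  case Nil
  then show ?case using inv i by simp
next
  case (Cons a w')
  obtain p where p: "1 \<le> p" "p < Suc m" "a = (p, Suc p)" using Cons.prems mem_path_edges by auto
  have IH: "case bruhat_word w' \<sigma> of None \<Rightarrow> wcoef (path_coeff m) i w' = (0::'k)
          | Some v \<Rightarrow> wcoef (path_coeff m) i w' = (1::'k)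
            \<and> min_then_decreasing (Suc m) (Suc (i + length w')) v \<and> i + length w' \<le> m"
    using Cons by auto
  show ?case
  proof (cases "bruhat_word w' \<sigma>")
    case None
    then show ?thesis using IH by simp
  next
    case (Some v)
    then have v: "wcoef (path_coeff m) i w' = (1::'k)"
      "min_then_decreasing (Suc m) (Suc (i + length w')) v" "i + length w' \<le> m"
      using IH by auto
    have step:
      "bruhat_gen a v = (if p = Suc (i + length w') then Some (swap_pos p (Suc p) v) else None)"
      using bruhat_gen_path_edge[OF v(2) _ p(1,2)] p(3) v(3) by simp
    have "path_coeff m (i + length w') a = ((if p = Suc (i + length w') then 1 else 0) :: 'k)"
      unfolding path_coeff_def using p v(3) by auto
    then show ?thesis
      using Some step v p min_then_decreasing_swap[OF v(2)] by auto
  qed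
qed

lemma kernel_sum_gen_words:
  assumes "E \<subseteq> gens n" "p \<in> fkG_kernel n E"
  shows "(\<Sum>w\<in>{w. set w \<subseteq> E \<and> length w = l}. (p w :: 'k::comm_ring_1) * F w)
    = (\<Sum>w\<in>gen_words n l. p w * F w)"
proof (rule sum.mono_neutral_left[OF finite_gen_words])
  show "{w. set w \<subseteq> E \<and> length w = l} \<subseteq> gen_words n l"
    unfolding gen_words_def using assms(1) by auto
  show "\<forall>w\<in>gen_words n l - {w. set w \<subseteq> E \<and> length w = l}. p w * F w = 0"
  proof
    fix w assume "w \<in> gen_words n l - {w. set w \<subseteq> E \<and> length w = l}"
    then have "w \<notin> lists E" unfolding gen_words_def by auto
    then have "p w = 0" using assms(2) unfolding fkG_kernel_def by blast
    then show "p w * F w = 0" by simp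
  qed
qed

lemma path_edges_subset_gens: "path_edges n \<subseteq> gens n"
  unfolding path_edges_def gens_def by auto

lemma path_module:
  "truncated_point_module (Suc m) (path_edges (Suc m)) m (path_coeff m :: nat \<Rightarrow> gen \<Rightarrow> 'k::field)"
  unfolding truncated_point_module_def
proof (intro conjI allI impI ballI)
  fix j a assume "m \<le> j"
  then show "(path_coeff m j a :: 'k) = 0" unfolding path_coeff_def by auto
next
  fix i assume i: "i \<le> m"
  define w where "w = map (\<lambda>s. (Suc s, Suc (Suc s))) (rev [0..<i])"
  have "set w \<subseteq> path_edges (Suc m)" "length w = i" "wcoef (path_coeff m) 0 w = (1::'k)"
    unfolding w_def path_edges_def wcoef_map_rev_upt using i by (auto simp: path_coeff_def)
  then show "\<exists>w. set w \<subseteq> path_edges (Suc m) \<and> length w = i \<and> wcoef (path_coeff m) 0 w \<noteq> (0::'k)"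
    by (intro exI[of _ w]) simp
next
  fix p :: "'k ncpoly" and i l
  assume p: "p \<in> fkG_kernel (Suc m) (path_edges (Suc m))" and i: "i \<le> m"
  define \<sigma> where "\<sigma> x = (if x = Suc i then 0 else Suc (Suc (Suc m)) - x)" for x
  have \<sigma>: "min_then_decreasing (Suc m) (Suc i) \<sigma>" "inj_on \<sigma> {1..Suc m}"
    unfolding min_then_decreasing_def \<sigma>_def inj_on_def by auto
  define G where "G ov = (case ov of None \<Rightarrow> 0 | Some (v :: nat \<Rightarrow> nat) \<Rightarrow> (1::'k))" for ov
  have "wcoef (path_coeff m) i w = G (bruhat_word w \<sigma>)" if "set w \<subseteq> path_edges (Suc m)" for w
    using wcoef_path_coeff_bruhat[OF that \<sigma>(1) i] unfolding G_def by (auto split: option.splits)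
  then have "(\<Sum>w\<in>{w. set w \<subseteq> path_edges (Suc m) \<and> length w = l}. p w * wcoef (path_coeff m) i w)
    = (\<Sum>w\<in>{w. set w \<subseteq> path_edges (Suc m) \<and> length w = l}. p w * G (bruhat_word w \<sigma>))"
    by (intro sum.cong) auto
  also have "\<dots> = (\<Sum>w\<in>gen_words (Suc m) l. p w * G (bruhat_word w \<sigma>))"
    by (rule kernel_sum_gen_words[OF path_edges_subset_gens p])
  also have "\<dots> = 0"
    using fk_ideal_annihilates_bruhat[of p "Suc m"] p \<sigma>(2)
    unfolding fkG_kernel_def annihilates_bruhat_def G_def by simp
  finally show
    "(\<Sum>w\<in>{w. set w \<subseteq> path_edges (Suc m) \<and> length w = l}. p w * wcoef (path_coeff m) i w) = 0" .
qed

lemma card_path_edges: "card (path_edges (Suc m)) = m"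
proof -
  have "path_edges (Suc m) = (\<lambda>p. (p, Suc p)) ` {1..m}" unfolding path_edges_def by auto
  moreover have "inj_on (\<lambda>p. (p, Suc p)) {1..m}" by (rule inj_onI) auto
  ultimately show ?thesis by (simp add: card_image)
qed

lemma adj_path_edges:
  "adj (path_edges n) x y \<longleftrightarrow> (1 \<le> x \<and> y = Suc x \<and> y \<le> n) \<or> (1 \<le> y \<and> x = Suc y \<and> x \<le> n)"
  unfolding adj_def path_edges_def by (auto simp: min_def max_def split: if_splits)

lemma path_edges_connected: "connected_graph n (path_edges n)"
proof -
  let ?R = "{(a, b). adj (path_edges n) a b}"
  have to_1: "(1, u) \<in> ?R\<^sup>* \<and> (u, 1) \<in> ?R\<^sup>*" if "u \<in> {1..n}" for u
    using that
  proof (induction u)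
    case (Suc u)
    show ?case
    proof (cases "u = 0")
      case False
      then have "(u, Suc u) \<in> ?R" "(Suc u, u) \<in> ?R" using Suc.prems by (auto simp: adj_path_edges)
      then show ?thesis using Suc False by (meson atLeastAtMost_iff Suc_leD less_one not_le
          converse_rtrancl_into_rtrancl rtrancl_into_rtrancl)
    qed simp
  qed simp
  show ?thesis
    unfolding connected_graph_def using to_1 by (meson rtrancl_trans)
qed

lemma path_edges_acyclic: "acyclic_graph (path_edges n)"
  unfolding acyclic_graph_def
proof
  assume "\<exists>vs. 3 \<le> length vs \<and> distinct vs \<and>
    (\<forall>i<length vs. adj (path_edges n) (vs ! i) (vs ! ((i + 1) mod length vs)))"
  then obtain vs where L: "3 \<le> length vs" and d: "distinct vs"
    and a: "\<forall>i<length vs. adj (path_edges n) (vs ! i) (vs ! ((i + 1) mod length vs))" by blast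
  define L where "L = length vs"
  define M where "M = Max (set vs)"
  have "M \<in> set vs" unfolding M_def using L by (intro Max_in) auto
  then obtain k where k: "k < L" "vs ! k = M" unfolding L_def by (metis in_set_conv_nth)
  have le: "vs ! i \<le> M" if "i < L" for i unfolding M_def L_def using that L_def by simp
  define k1 where "k1 = (if k = L - 1 then 0 else Suc k)"
  define k0 where "k0 = (if k = 0 then L - 1 else k - 1)"
  have k1: "k1 < L" "(k + 1) mod L = k1" and k0: "k0 < L" "(k0 + 1) mod L = k"
    unfolding k1_def k0_def using k L L_def by (auto simp: Suc_diff_Suc simp del: One_nat_def)
  have "adj (path_edges n) M (vs ! k1)" using a k k1 unfolding L_def by metis
  then have "vs ! k1 = M - 1" using le[OF k1(1)] by (auto simp: adj_path_edges)
  moreover have "adj (path_edges n) (vs ! k0) M" using a k0 k unfolding L_def by metis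
  then have "vs ! k0 = M - 1" using le[OF k0(1)] by (auto simp: adj_path_edges)
  moreover have "k1 \<noteq> k0" unfolding k1_def k0_def using k L L_def by auto
  ultimately show False using d k1 k0 unfolding L_def by (metis nth_eq_iff_index_eq)
qed

lemma path_edges_tree: "is_tree (Suc m) (path_edges (Suc m))"
  unfolding is_tree_def using path_edges_subset_gens path_edges_connected path_edges_acyclic by auto

lemma pinv_le_card:
  assumes "E \<subseteq> gens n" "acyclic_graph E"
  shows "pinv TYPE('k::field) n E \<le> enat (card E)"
  unfolding pinv_def using degree_le_card_edges[OF assms(1) _ assms(2)] by (auto intro!: Sup_least)

lemma pinv_ge:
  "truncated_point_module n E d (c :: nat \<Rightarrow> gen \<Rightarrow> 'k::field) \<Longrightarrow> enat d \<le> pinv TYPE('k) n E"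
  unfolding pinv_def by (rule Sup_upper) blast

text \<open>The argument works over any field.\<close>
theorem theorem1p2:
  fixes T :: "'k::field itself"
  assumes alg_closed: "\<forall>q :: 'k poly. 0 < degree q \<longrightarrow> (\<exists>x. poly q x = 0)"
  shows "(\<forall>n E. is_tree n E \<longrightarrow> pinv TYPE('k) n E \<le> enat (card E))
         \<and> (\<forall>m. pinv TYPE('k) (m + 1) (path_edges (m + 1)) = enat m)"
proof -
  have tree_bound: "pinv TYPE('k) n E \<le> enat (card E)" if "is_tree n E" for n E
    using that unfolding is_tree_def by (intro pinv_le_card) auto
  have "pinv TYPE('k) (Suc m) (path_edges (Suc m)) = enat m" for m
  proof (rule order_antisym)
    show "pinv TYPE('k) (Suc m) (path_edges (Suc m)) \<le> enat m"
      using tree_bound[OF path_edges_tree] by (simp add: card_path_edges)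
    show "enat m \<le> pinv TYPE('k) (Suc m) (path_edges (Suc m))"
      by (rule pinv_ge[OF path_module])
  qed
  then show ?thesis using tree_bound by simp
qed

end
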